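(* Let $(v,L)$ be a (sufficiently regular) solution on $(t_0,t_1)\times\mathbb T^3$ of the system \[ \begin{aligned} \partial_t v^i&=-\frac{\alpha(1-3K)}{t}v^i - \frac{K}{1+K}t^{-\alpha}(1-|v|^2)\partial_i L-t^{-\alpha}v^j\partial_j v^i +t^{-\alpha}\Big(1-\frac{1-K}{1-K|v|^2}\Big)v^i\partial_j v^j\\ &\quad+t^{-\alpha}\frac{1-K}{1+K}\Big(1-\frac{1-K}{1-K|v|^2}\Big)v^i v^j\partial_j L +\frac{\alpha(1-3K)}{t}\frac{1-K}{1-K|v|^2}|v|^2 v^i,\\ \partial_tL&=-t^{-\alpha}\frac{1+K}{1-K|v|^2}\partial_j v^j-t^{-\alpha}\frac{1-K}{1-K|v|^2} v^j\partial_j L+\frac{\alpha(1+K)}{t}\frac{1-3K}{1-K|v|^2}|v|^2 . \end{aligned} \] Then \[ \begin{aligned} \partial_t\Big(\frac12\int\frac{1}{1-|v|^2} v_m\partial_i v^m v_n\partial^i v^n\Big) &=-\frac{\alpha(1-3K)}{t}\int\frac{v_m\partial^iv^m}{1-|v|^2}v_n\partial_iv^n \\ &\quad-\frac{K}{1+K}t^{-\alpha}\int v_m\partial^iv^m\, \partial_i(v^n\partial_nL)\frac{1-|v|^2}{1-K|v|^2}\\ &\quad +t^{-\alpha}\int\frac{v_m\partial^iv^m}{1-|v|^2}\partial_i(\partial_jv^j)\,|v|^2\Big(1-\frac{1-K}{1-K|v|^2}\Big) +f(t), \end{aligned} \] where $f(t)$ is a perturbative term.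
   Context: Standing assumptions: $\alpha>0$ and $0\le K\le1/3$ constants, $t>1$, $|v|<1/10$. $\int$ denotes $\int_{\mathbb T^3}\cdot\,d^3x$ over the standard flat torus; indices raised/lowered with $\delta$, repeated indices summed, $|v|^2=\delta_{ij}v^iv^j$; $D$ is the spatial gradient. A function $f(t)$ is called perturbative if $|f(t)|\le C\frac{1+t^{1-\alpha}}{t}p(\|DL\|_{L^2},\|Dv\|_{L^2},\|v\|_{L^\infty},\|Dv\|_{L^\infty})$ for a constant $C$ and a polynomial $p$ whose lowest-order terms have degree at least 3. *)

theory Defs
  imports "HOL-Analysis.Analysis"
begin

text \<open>C-infinity: differentiable, and every first partial derivative is again C-infinity
  (coinductively, i.e. derivatives of all orders exist).\<close>
coinductive smooth_on :: "'a::euclidean_space set \<Rightarrow> ('a \<Rightarrow> real) \<Rightarrow> bool" where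
  "f differentiable_on S \<Longrightarrow> (\<forall>b\<in>Basis. smooth_on S (\<lambda>x. frechet_derivative f (at x) b))
     \<Longrightarrow> smooth_on S f"

definition pd :: "3 \<Rightarrow> (real^3 \<Rightarrow> real) \<Rightarrow> real^3 \<Rightarrow> real" where
  "pd i f x = deriv (\<lambda>s. f (x + s *\<^sub>R axis i 1)) 0"

definition dtd :: "(real \<Rightarrow> real^3 \<Rightarrow> real) \<Rightarrow> real \<Rightarrow> real^3 \<Rightarrow> real" where
  "dtd u t x = deriv (\<lambda>s. u s x) t"

text \<open>Standard flat torus R^3/Z^3: periodic functions, integrated over the unit cube.\<close>
definition periodic3 :: "(real^3 \<Rightarrow> 'b) \<Rightarrow> bool" where
  "periodic3 f \<longleftrightarrow> (\<forall>x i. f (x + axis i 1) = f x)"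

definition tint :: "(real^3 \<Rightarrow> real) \<Rightarrow> real" where
  "tint f = integral (cbox 0 One) f"

definition DL_L2 :: "(real \<Rightarrow> real^3 \<Rightarrow> real) \<Rightarrow> real \<Rightarrow> real" where
  "DL_L2 L t = sqrt (tint (\<lambda>x. \<Sum>i\<in>UNIV. (pd i (L t) x)\<^sup>2))"

definition Dv_L2 :: "(real \<Rightarrow> real^3 \<Rightarrow> real^3) \<Rightarrow> real \<Rightarrow> real" where
  "Dv_L2 v t = sqrt (tint (\<lambda>x. \<Sum>i\<in>UNIV. \<Sum>j\<in>UNIV. (pd i (\<lambda>y. v t y $ j) x)\<^sup>2))"

definition v_Linf :: "(real \<Rightarrow> real^3 \<Rightarrow> real^3) \<Rightarrow> real \<Rightarrow> real" where
  "v_Linf v t = (SUP x. norm (v t x))"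

definition Dv_Linf :: "(real \<Rightarrow> real^3 \<Rightarrow> real^3) \<Rightarrow> real \<Rightarrow> real" where
  "Dv_Linf v t = (SUP x. sqrt (\<Sum>i\<in>UNIV. \<Sum>j\<in>UNIV. (pd i (\<lambda>y. v t y $ j) x)\<^sup>2))"

text \<open>Polynomials in 4 real variables: finitely supported coefficient function on exponent
  tuples; "lowest-order terms of degree at least 3" means all monomials have degree \<ge> 3.\<close>
definition poly4 :: "(nat \<times> nat \<times> nat \<times> nat \<Rightarrow> real) \<Rightarrow> real \<Rightarrow> real \<Rightarrow> real \<Rightarrow> real \<Rightarrow> real" where
  "poly4 c a b d e = (\<Sum>(i,j,k,l)\<in>{m. c m \<noteq> 0}. c (i,j,k,l) * a^i * b^j * d^k * e^l)"

definition lowdeg3 :: "(nat \<times> nat \<times> nat \<times> nat \<Rightarrow> real) \<Rightarrow> bool" where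
  "lowdeg3 c \<longleftrightarrow> finite {m. c m \<noteq> 0} \<and> (\<forall>i j k l. c (i,j,k,l) \<noteq> 0 \<longrightarrow> 3 \<le> i + j + k + l)"

definition wv :: "(real \<Rightarrow> real^3 \<Rightarrow> real^3) \<Rightarrow> real \<Rightarrow> 3 \<Rightarrow> real^3 \<Rightarrow> real" where
  "wv v t i x = (\<Sum>m\<in>UNIV. v t x $ m * pd i (\<lambda>y. v t y $ m) x)"

end

theory Submission
  imports Defs
begin

definition dir_deriv :: "('a::real_normed_vector \<Rightarrow> real) \<Rightarrow> 'a \<Rightarrow> 'a \<Rightarrow> real" where
  "dir_deriv f b x = frechet_derivative f (at x) b"

lemma has_derivative_dir_deriv:
  "f differentiable (at x) \<Longrightarrow> (f has_derivative (\<lambda>h. dir_deriv f h x)) (at x)"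
  unfolding dir_deriv_def by (simp add: frechet_derivative_works eta_contract_eq)

lemma dir_deriv_eq:
  "(f has_derivative f') (at x) \<Longrightarrow> dir_deriv f b x = f' b"
  unfolding dir_deriv_def by (simp add: frechet_derivative_at[symmetric])

lemma smooth_on_imp_differentiable_on: "smooth_on S f \<Longrightarrow> f differentiable_on S"
  by (erule smooth_on.cases) auto

lemma smooth_on_dir_deriv: "smooth_on S f \<Longrightarrow> b \<in> Basis \<Longrightarrow> smooth_on S (dir_deriv f b)"
  unfolding dir_deriv_def by (erule smooth_on.cases) auto

lemma smooth_on_imp_continuous_on: "smooth_on S f \<Longrightarrow> continuous_on S f"
  using smooth_on_imp_differentiable_on differentiable_imp_continuous_on by blast

lemma smooth_on_imp_differentiable_at:
  "smooth_on S f \<Longrightarrow> open S \<Longrightarrow> x \<in> S \<Longrightarrow> f differentiable (at x)"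
  by (metis at_within_open differentiable_on_def smooth_on_imp_differentiable_on)

lemma smooth_on_const: "smooth_on S (\<lambda>x. c)"
proof (coinduction arbitrary: c)
  case smooth_on
  then show ?case by (auto simp: frechet_derivative_const)
qed

lemma smooth_on_sum_of_products:
  fixes n :: nat
  assumes "open S" and "\<And>i. i < n \<Longrightarrow> smooth_on S (f i) \<and> smooth_on S (g i)"
    and "\<And>x. x \<in> S \<Longrightarrow> h x = (\<Sum>i<n. f i x * g i x)"
  shows "smooth_on S h"
  using assms(2,3)
proof (coinduction arbitrary: h n f g)
  case smooth_on
  have fg: "smooth_on S (f i) \<and> smooth_on S (g i)" if "i < n" for i
    using smooth_on(1) that by blast
  note h = smooth_on(2)
  have diff: "f i differentiable (at x)" "g i differentiable (at x)" if "i < n" "x \<in> S" for i x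
    using fg[OF that(1)] smooth_on_imp_differentiable_at[OF _ \<open>open S\<close> that(2)] by blast+
  have hd: "(h has_derivative (\<lambda>b. \<Sum>i<n. dir_deriv (f i) b x * g i x + f i x * dir_deriv (g i) b x)) (at x)"
    if x: "x \<in> S" for x
  proof (rule has_derivative_transform_within_open[OF _ \<open>open S\<close> x])
    show "((\<lambda>x. \<Sum>i<n. f i x * g i x) has_derivative
        (\<lambda>b. \<Sum>i<n. dir_deriv (f i) b x * g i x + f i x * dir_deriv (g i) b x)) (at x)"
      by (auto intro!: derivative_eq_intros has_derivative_dir_deriv diff x simp: algebra_simps)
  qed (use h in auto)
  define F where "F b j = (if even j then dir_deriv (f (j div 2)) b else f (j div 2))" for b j
  define G where "G b j = (if even j then g (j div 2) else dir_deriv (g (j div 2)) b)" for b j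
  have FG: "smooth_on S (F b j) \<and> smooth_on S (G b j)" if "b \<in> Basis" "j < 2 * n" for b j
  proof -
    have "j div 2 < n" using that(2) by (simp add: less_mult_imp_div_less mult.commute)
    then show ?thesis using fg[of "j div 2"] that(1) smooth_on_dir_deriv unfolding F_def G_def by auto
  qed
  have deriv: "dir_deriv h b x = (\<Sum>j<2 * n. F b j x * G b j x)" if "x \<in> S" for b x
  proof -
    have "(\<Sum>j<2 * n. F b j x * G b j x)
        = (\<Sum>j<2 * n. if even j then dir_deriv (f (j div 2)) b x * g (j div 2) x
                      else f (j div 2) x * dir_deriv (g (j div 2)) b x)"
      by (rule sum.cong) (auto simp: F_def G_def)
    also have "\<dots> = (\<Sum>i<n. dir_deriv (f i) b x * g i x + f i x * dir_deriv (g i) b x)"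
      by (simp add: sum_split_even_odd sum.distrib)
    finally show ?thesis using dir_deriv_eq[OF hd[OF that]] by simp
  qed
  have "h differentiable_on S"
    using hd by (meson differentiable_at_imp_differentiable_on differentiable_def)
  moreover have "\<exists>h' (n' :: nat) f' g'. (\<lambda>x. frechet_derivative h (at x) b) = h'
      \<and> (\<forall>i<n'. smooth_on S (f' i) \<and> smooth_on S (g' i))
      \<and> (\<forall>x. x \<in> S \<longrightarrow> h' x = (\<Sum>i<n'. f' i x * g' i x))" if "b \<in> Basis" for b
  proof -
    have "(\<forall>j<2 * n. smooth_on S (F b j) \<and> smooth_on S (G b j))
        \<and> (\<forall>x. x \<in> S \<longrightarrow> frechet_derivative h (at x) b = (\<Sum>j<2 * n. F b j x * G b j x))"
      using FG[OF that] deriv unfolding dir_deriv_def by blast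
    then show ?thesis by (intro exI[of _ "\<lambda>x. frechet_derivative h (at x) b"] exI[of _ "2 * n"] exI[of _ "F b"] exI[of _ "G b"]) simp
  qed
  ultimately show ?case by (intro exI[of _ h] exI[of _ S]) auto
qed

lemma smooth_on_mult:
  "open S \<Longrightarrow> smooth_on S f \<Longrightarrow> smooth_on S g \<Longrightarrow> smooth_on S (\<lambda>x. f x * g x)"
  by (rule smooth_on_sum_of_products[where n=1 and f="\<lambda>_. f" and g="\<lambda>_. g"]) (auto simp: lessThan_Suc)

lemma smooth_on_add:
  assumes "open S" "smooth_on S f" "smooth_on S g"
  shows "smooth_on S (\<lambda>x. f x + g x)"
  by (rule smooth_on_sum_of_products[where n=2 and f="\<lambda>i. if i = 0 then f else g" and g="\<lambda>_ _. 1"])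
     (use assms smooth_on_const in \<open>auto simp: numeral_2_eq_2 lessThan_Suc\<close>)

lemma smooth_on_sum:
  "open S \<Longrightarrow> (\<And>i. i \<in> A \<Longrightarrow> smooth_on S (f i)) \<Longrightarrow> smooth_on S (\<lambda>x. \<Sum>i\<in>A. f i x)"
  by (induction A rule: infinite_finite_induct) (auto intro: smooth_on_const smooth_on_add)

lemma dir_deriv_sum_mult:
  assumes "\<And>m. m \<in> A \<Longrightarrow> f m differentiable (at x)" "\<And>m. m \<in> A \<Longrightarrow> g m differentiable (at x)"
  shows "dir_deriv (\<lambda>x. \<Sum>m\<in>A. f m x * g m x) b x
    = (\<Sum>m\<in>A. dir_deriv (f m) b x * g m x + f m x * dir_deriv (g m) b x)"
  by (rule dir_deriv_eq) (auto intro!: derivative_eq_intros has_derivative_dir_deriv assms simp: algebra_simps)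

lemma has_real_derivative_along_line:
  assumes "(f has_derivative f') (at (p + s *\<^sub>R b))"
  shows "((\<lambda>s. f (p + s *\<^sub>R b)) has_real_derivative f' b) (at s)"
proof -
  have "((f \<circ> (\<lambda>s. p + s *\<^sub>R b)) has_derivative (f' \<circ> (\<lambda>s. s *\<^sub>R b))) (at s)"
    by (rule diff_chain_at[of "\<lambda>s. p + s *\<^sub>R b" "\<lambda>s. s *\<^sub>R b" s f f', OF _ assms])
       (auto intro!: derivative_eq_intros)
  moreover have "f' \<circ> (\<lambda>s. s *\<^sub>R b) = (\<lambda>s. s * f' b)"
    using has_derivative_bounded_linear[OF assms] by (auto simp: linear_simps o_def)
  ultimately show ?thesis
    by (simp add: has_field_derivative_def o_def mult.commute[of _ "f' b"])
qed

lemma pd_eq: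
  assumes "(f has_derivative f') (at x)"
  shows "pd i f x = f' (axis i 1)"
  unfolding pd_def using has_real_derivative_along_line[of f f' x 0] assms
  by (auto intro: DERIV_imp_deriv)

lemma has_real_derivative_integral_parameter:
  fixes f f' :: "real \<Rightarrow> 'a::euclidean_space \<Rightarrow> real"
  assumes "open U" "t \<in> U"
    and deriv: "\<And>s x. s \<in> U \<Longrightarrow> x \<in> cbox c d \<Longrightarrow> ((\<lambda>s. f s x) has_real_derivative f' s x) (at s)"
    and int: "\<And>s. s \<in> U \<Longrightarrow> f s integrable_on cbox c d"
    and cont: "continuous_on (U \<times> cbox c d) (\<lambda>(s, x). f' s x)"
  shows "((\<lambda>s. integral (cbox c d) (f s)) has_real_derivative integral (cbox c d) (f' t)) (at t)"
proof -
  obtain e where e: "e > 0" "ball t e \<subseteq> U" using assms(1,2) open_contains_ball by blast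
  define V where "V = cball t (e / 2)"
  have "V \<subseteq> ball t e" unfolding V_def using e(1) by (simp add: cball_subset_ball_iff)
  with e(2) have VU: "V \<subseteq> U" by blast
  have "((\<lambda>s. integral (cbox c d) (f s)) has_real_derivative integral (cbox c d) (f' t)) (at t within V)"
  proof (rule leibniz_rule_field_derivative)
    show "((\<lambda>s. f s x) has_field_derivative f' s x) (at s within V)" if "s \<in> V" "x \<in> cbox c d" for s x
      using deriv[of s x] that VU by (blast intro: has_field_derivative_at_within)
    show "continuous_on (V \<times> cbox c d) (\<lambda>(s, x). f' s x)"
      by (rule continuous_on_subset[OF cont]) (use VU in blast)
    show "f s integrable_on cbox c d" if "s \<in> V" for s
      using VU that by (intro int) blast
    show "t \<in> V" using e by (simp add: V_def)
    show "convex V" by (simp add: V_def)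
  qed
  moreover have "t \<in> interior V" using e by (simp add: V_def)
  ultimately show ?thesis by (metis at_within_interior)
qed

lemma dir_deriv_has_integral_on_line:
  assumes "f differentiable_on S" "open S" "a \<le> r" and line: "\<And>\<rho>. \<rho> \<in> {a..r} \<Longrightarrow> p + \<rho> *\<^sub>R c \<in> S"
  shows "((\<lambda>\<rho>. dir_deriv f c (p + \<rho> *\<^sub>R c)) has_integral f (p + r *\<^sub>R c) - f (p + a *\<^sub>R c)) {a..r}"
proof (rule fundamental_theorem_of_calculus[OF \<open>a \<le> r\<close>])
  fix \<rho> assume "\<rho> \<in> {a..r}"
  then have "f differentiable (at (p + \<rho> *\<^sub>R c) within S)" "p + \<rho> *\<^sub>R c \<in> S"
    using assms(1) line unfolding differentiable_on_def by blast+
  then have "f differentiable (at (p + \<rho> *\<^sub>R c))"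
    by (simp add: at_within_open[OF _ assms(2)])
  from has_real_derivative_along_line[OF has_derivative_dir_deriv[OF this]]
  have "((\<lambda>\<rho>. f (p + \<rho> *\<^sub>R c)) has_vector_derivative dir_deriv f c (p + \<rho> *\<^sub>R c)) (at \<rho>)"
    by (simp add: has_real_derivative_iff_has_vector_derivative)
  then show "((\<lambda>\<rho>. f (p + \<rho> *\<^sub>R c)) has_vector_derivative dir_deriv f c (p + \<rho> *\<^sub>R c)) (at \<rho> within {a..r})"
    by (rule has_vector_derivative_at_within)
qed

lemma dir_deriv_commute:
  fixes f :: "'a::euclidean_space \<Rightarrow> real"
  assumes sm: "smooth_on S f" and S: "open S" "z \<in> S" and bc: "b \<in> Basis" "c \<in> Basis"
  shows "dir_deriv (dir_deriv f b) c z = dir_deriv (dir_deriv f c) b z"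
proof -
  define B C where "B = dir_deriv f b" and "C = dir_deriv f c"
  define G where "G = dir_deriv C b"
  have smB: "smooth_on S B" and smC: "smooth_on S C" and smG: "smooth_on S G"
    unfolding B_def C_def G_def using sm bc by (auto intro: smooth_on_dir_deriv)
  have diff: "h differentiable (at x)" if "smooth_on S h" "x \<in> S" for h x
    using smooth_on_imp_differentiable_at[OF that(1) S(1) that(2)] .
  obtain e where e: "e > 0" "ball z e \<subseteq> S" using S open_contains_ball by blast
  define \<delta> where "\<delta> = e / 3"
  have \<delta>: "\<delta> > 0" using e by (simp add: \<delta>_def)
  have inS: "z + s *\<^sub>R b + r *\<^sub>R c \<in> S" if "\<bar>s\<bar> \<le> \<delta>" "\<bar>r\<bar> \<le> \<delta>" for s r
  proof -
    have "norm (s *\<^sub>R b + r *\<^sub>R c) < e"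
      using norm_triangle_ineq[of "s *\<^sub>R b" "r *\<^sub>R c"] that bc e by (simp add: \<delta>_def)
    then have "z + s *\<^sub>R b + r *\<^sub>R c \<in> ball z e"
      by (metis add.assoc add_diff_cancel_left' dist_commute dist_norm mem_ball)
    then show ?thesis using e by blast
  qed
  have line: "((\<lambda>s. h (p + s *\<^sub>R d)) has_real_derivative dir_deriv h d (p + s *\<^sub>R d)) (at s)"
    if "smooth_on S h" "p + s *\<^sub>R d \<in> S" for h p d s
    by (rule has_real_derivative_along_line[OF has_derivative_dir_deriv[OF diff[OF that]]])
  have key: "B (z + r *\<^sub>R c) - B (z + (-\<delta>) *\<^sub>R c) = integral {-\<delta>..r} (\<lambda>\<rho>. G (z + \<rho> *\<^sub>R c))"
    if r: "r \<in> {-\<delta>..\<delta>}" for r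
  proof -
    define \<Phi> where "\<Phi> s = integral (cbox (-\<delta>) r) (\<lambda>\<rho>. C (z + s *\<^sub>R b + \<rho> *\<^sub>R c))" for s
    have C_int: "((\<lambda>\<rho>. C (z + s *\<^sub>R b + \<rho> *\<^sub>R c)) has_integral
        f (z + s *\<^sub>R b + r *\<^sub>R c) - f (z + s *\<^sub>R b + (-\<delta>) *\<^sub>R c)) {-\<delta>..r}" if "s \<in> {-\<delta><..<\<delta>}" for s
      unfolding C_def using that r
      by (intro dir_deriv_has_integral_on_line[OF smooth_on_imp_differentiable_on[OF sm] S(1)] inS) auto
    have "(\<Phi> has_real_derivative integral (cbox (-\<delta>) r) (\<lambda>\<rho>. G (z + 0 *\<^sub>R b + \<rho> *\<^sub>R c))) (at 0)"
      unfolding \<Phi>_def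
    proof (rule has_real_derivative_integral_parameter[where U="{-\<delta><..<\<delta>}"
          and f'="\<lambda>s \<rho>. G (z + s *\<^sub>R b + \<rho> *\<^sub>R c)"])
      show "((\<lambda>s. C (z + s *\<^sub>R b + \<rho> *\<^sub>R c)) has_real_derivative G (z + s *\<^sub>R b + \<rho> *\<^sub>R c)) (at s)"
        if "s \<in> {-\<delta><..<\<delta>}" "\<rho> \<in> cbox (-\<delta>) r" for s \<rho>
        using line[OF smC, of "z + \<rho> *\<^sub>R c" s b] inS[of s \<rho>] that r by (auto simp: G_def add_ac)
      show "(\<lambda>\<rho>. C (z + s *\<^sub>R b + \<rho> *\<^sub>R c)) integrable_on cbox (-\<delta>) r" if "s \<in> {-\<delta><..<\<delta>}" for s
        using C_int[OF that] by auto
      have "continuous_on ({-\<delta><..<\<delta>} \<times> cbox (-\<delta>) r) (G \<circ> (\<lambda>(s, \<rho>). z + s *\<^sub>R b + \<rho> *\<^sub>R c))"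
        by (intro continuous_on_compose continuous_on_subset[OF smooth_on_imp_continuous_on[OF smG]])
           (use r in \<open>auto intro!: continuous_intros inS simp: split_beta\<close>)
      then show "continuous_on ({-\<delta><..<\<delta>} \<times> cbox (-\<delta>) r) (\<lambda>(s, \<rho>). G (z + s *\<^sub>R b + \<rho> *\<^sub>R c))"
        by (simp add: o_def split_beta)
    qed (use \<delta> in auto)
    moreover have "(\<Phi> has_real_derivative B (z + r *\<^sub>R c) - B (z + (-\<delta>) *\<^sub>R c)) (at 0)"
    proof (rule has_field_derivative_transform_within_open[where S="{-\<delta><..<\<delta>}"])
      show "((\<lambda>s. f (z + r *\<^sub>R c + s *\<^sub>R b) - f (z + (-\<delta>) *\<^sub>R c + s *\<^sub>R b)) has_real_derivative
          B (z + r *\<^sub>R c) - B (z + (-\<delta>) *\<^sub>R c)) (at 0)"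
        unfolding B_def using line[OF sm, of "z + r *\<^sub>R c" 0 b] line[OF sm, of "z + (-\<delta>) *\<^sub>R c" 0 b]
          inS[of 0 r] inS[of 0 "-\<delta>"] \<delta> r by (intro DERIV_diff) auto
      show "f (z + r *\<^sub>R c + s *\<^sub>R b) - f (z + (-\<delta>) *\<^sub>R c + s *\<^sub>R b) = \<Phi> s" if "s \<in> {-\<delta><..<\<delta>}" for s
        using integral_unique[OF C_int[OF that]] by (simp add: \<Phi>_def algebra_simps)
    qed (use \<delta> in auto)
    ultimately have "integral (cbox (-\<delta>) r) (\<lambda>\<rho>. G (z + 0 *\<^sub>R b + \<rho> *\<^sub>R c))
        = B (z + r *\<^sub>R c) - B (z + (-\<delta>) *\<^sub>R c)"
      by (rule DERIV_unique)
    then show ?thesis by simp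
  qed
  have intG: "((\<lambda>r. integral {-\<delta>..r} (\<lambda>\<rho>. G (z + \<rho> *\<^sub>R c))) has_real_derivative G (z + 0 *\<^sub>R c)) (at 0)"
  proof -
    have "continuous_on {-\<delta>..\<delta>} (G \<circ> (\<lambda>\<rho>. z + \<rho> *\<^sub>R c))"
      by (intro continuous_on_compose continuous_on_subset[OF smooth_on_imp_continuous_on[OF smG]])
         (use inS[of 0] in \<open>auto intro!: continuous_intros simp: image_subset_iff\<close>)
    from integral_has_real_derivative[OF this[unfolded o_def], of 0] show ?thesis
      using \<delta> by (simp add: at_within_interior[of 0 "{-\<delta>..\<delta>}"])
  qed
  have "((\<lambda>r. B (z + (-\<delta>) *\<^sub>R c) + integral {-\<delta>..r} (\<lambda>\<rho>. G (z + \<rho> *\<^sub>R c)))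
      has_real_derivative G z) (at 0)"
    using DERIV_add[OF DERIV_const intG] by simp
  then have "((\<lambda>r. B (z + r *\<^sub>R c)) has_real_derivative G z) (at 0)"
  proof (rule has_field_derivative_transform_within_open[where S="{-\<delta><..<\<delta>}"])
    show "B (z + (-\<delta>) *\<^sub>R c) + integral {-\<delta>..r} (\<lambda>\<rho>. G (z + \<rho> *\<^sub>R c)) = B (z + r *\<^sub>R c)"
      if "r \<in> {-\<delta><..<\<delta>}" for r
      using key[of r] that by simp
  qed (use \<delta> in auto)
  moreover have "((\<lambda>r. B (z + r *\<^sub>R c)) has_real_derivative dir_deriv B c z) (at 0)"
    using line[OF smB, of z 0 c] S by simp
  ultimately have "G z = dir_deriv B c z" by (rule DERIV_unique)
  then show ?thesis by (simp add: B_def C_def G_def)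
qed

definition dx :: "3 \<Rightarrow> (real \<times> (real^3) \<Rightarrow> real) \<Rightarrow> real \<times> (real^3) \<Rightarrow> real" where
  "dx i f = dir_deriv f (0, axis i 1)"

definition dt :: "(real \<times> (real^3) \<Rightarrow> real) \<Rightarrow> real \<times> (real^3) \<Rightarrow> real" where
  "dt f = dir_deriv f (1, 0)"

lemma space_axis_in_Basis: "((0::real), axis i (1::real) :: real^3) \<in> Basis"
  by (simp add: Basis_prod_def)

lemma time_axis_in_Basis: "((1::real), (0::real^3)) \<in> Basis"
  by (simp add: Basis_prod_def)

lemma smooth_on_dx: "smooth_on S f \<Longrightarrow> smooth_on S (dx i f)"
  unfolding dx_def by (rule smooth_on_dir_deriv[OF _ space_axis_in_Basis])

lemma smooth_on_dt: "smooth_on S f \<Longrightarrow> smooth_on S (dt f)"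
  unfolding dt_def by (rule smooth_on_dir_deriv[OF _ time_axis_in_Basis])

lemma dx_commute: "smooth_on S f \<Longrightarrow> open S \<Longrightarrow> z \<in> S \<Longrightarrow> dx i (dx j f) z = dx j (dx i f) z"
  unfolding dx_def by (rule dir_deriv_commute[OF _ _ _ space_axis_in_Basis space_axis_in_Basis])

lemma dt_dx_commute: "smooth_on S f \<Longrightarrow> open S \<Longrightarrow> z \<in> S \<Longrightarrow> dt (dx i f) z = dx i (dt f) z"
  unfolding dx_def dt_def by (rule dir_deriv_commute[OF _ _ _ space_axis_in_Basis time_axis_in_Basis])

lemma has_derivative_space_slice:
  assumes "f differentiable (at (t, y))"
  shows "((\<lambda>y. f (t, y)) has_derivative (\<lambda>h. dir_deriv f (0, h) (t, y))) (at y)"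
proof -
  have "((\<lambda>y. (t, y)) has_derivative (\<lambda>h. (0, h))) (at y)"
    by (auto intro!: derivative_eq_intros)
  from diff_chain_at[OF this has_derivative_dir_deriv[OF assms]] show ?thesis
    by (simp add: o_def)
qed

lemma pd_space_slice: "f differentiable (at (t, y)) \<Longrightarrow> pd i (\<lambda>y. f (t, y)) y = dx i f (t, y)"
  unfolding dx_def by (rule pd_eq[OF has_derivative_space_slice])

lemma DERIV_time_slice:
  "f differentiable (at (s, x)) \<Longrightarrow> ((\<lambda>s. f (s, x)) has_real_derivative dt f (s, x)) (at s)"
  using has_real_derivative_along_line[OF has_derivative_dir_deriv, of f "(0, x)" s "(1, 0)"]
  by (simp add: dt_def)

lemma continuous_on_space_slice:
  "continuous_on (T \<times> UNIV) f \<Longrightarrow> t \<in> T \<Longrightarrow> continuous_on UNIV (\<lambda>y. f (t, y))"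
  by (rule continuous_on_compose2[of "T \<times> UNIV" f]) (auto intro!: continuous_intros)

lemma periodic3_add_int:
  assumes "periodic3 f" shows "f (x + of_int n *\<^sub>R axis i 1) = f x"
proof -
  have nat: "f (x + of_nat k *\<^sub>R axis i 1) = f x" for x k
  proof (induction k)
    case (Suc k)
    have "f (x + of_nat (Suc k) *\<^sub>R axis i 1) = f ((x + of_nat k *\<^sub>R axis i 1) + axis i 1)"
      by (simp add: algebra_simps)
    with Suc assms show ?case unfolding periodic3_def by simp
  qed simp
  show ?thesis
  proof (cases "n \<ge> 0")
    case True
    then show ?thesis using nat[of x "nat n"] by simp
  next
    case False
    then have "f x = f ((x + of_int n *\<^sub>R axis i 1) + of_nat (nat (-n)) *\<^sub>R axis i 1)"
      by (simp add: algebra_simps)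
    then show ?thesis using nat by simp
  qed
qed

lemma periodic3_pd:
  assumes "periodic3 f" shows "periodic3 (pd i f)"
proof -
  have "(\<lambda>s. f (x + axis k 1 + s *\<^sub>R axis i 1)) = (\<lambda>s. f (x + s *\<^sub>R axis i 1))" for x k
    using assms unfolding periodic3_def by (metis add.commute add.left_commute)
  then show ?thesis unfolding periodic3_def pd_def by simp
qed

lemma sum_Basis_vec_nth [simp]: "(\<Sum>x\<in>(Basis :: (real^'n) set). x $ i) = 1"
  by (metis Cart_1 one_index[of i] sum_component[of "\<lambda>x. x" Basis i])

lemma periodic3_range_eq_cube_image:
  assumes "periodic3 f" shows "range f = f ` cbox 0 One"
proof -
  have "f x \<in> f ` cbox 0 One" for x
  proof -
    define y where "y = (\<chi> i. frac (x $ i))"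
    define n where "n i = \<lfloor>x $ i\<rfloor>" for i
    have "y \<in> cbox 0 One"
      by (auto simp: mem_box_cart y_def frac_lt_1 less_imp_le)
    have "x = ((y + of_int (n 1) *\<^sub>R axis 1 1) + of_int (n 2) *\<^sub>R axis 2 1) + of_int (n 3) *\<^sub>R axis 3 1"
      by (simp add: vec_eq_iff y_def n_def axis_def frac_def forall_3)
    then have "f x = f y" by (simp add: periodic3_add_int[OF assms])
    with \<open>y \<in> cbox 0 One\<close> show ?thesis by blast
  qed
  then show ?thesis by blast
qed

lemma periodic3_le_SUP:
  fixes f :: "real^3 \<Rightarrow> real"
  assumes "periodic3 f" "continuous_on UNIV f"
  shows "f x \<le> (SUP y. f y)"
proof -
  have "compact (f ` cbox 0 One)"
    by (rule compact_continuous_image) (auto intro: continuous_on_subset[OF assms(2)])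
  then have "bdd_above (range f)"
    by (simp add: periodic3_range_eq_cube_image[OF assms(1)] bounded_imp_bdd_above compact_imp_bounded)
  then show ?thesis by (simp add: cSUP_upper)
qed

lemma integral_periodic3_translate:
  fixes f :: "real^3 \<Rightarrow> real"
  assumes per: "periodic3 f" and cont: "continuous_on UNIV f"
  shows "integral (cbox 0 One) (\<lambda>x. f (x + s *\<^sub>R axis j 1)) = integral (cbox 0 One) f"
proof -
  define e :: "real^3" where "e = axis j 1"
  define \<sigma> where "\<sigma> = frac s"
  have \<sigma>: "0 \<le> \<sigma>" "\<sigma> \<le> 1" by (auto simp: \<sigma>_def frac_lt_1 less_imp_le)
  have "f (x + s *\<^sub>R e) = f ((x + \<sigma> *\<^sub>R e) + of_int \<lfloor>s\<rfloor> *\<^sub>R axis j 1)" for x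
    by (simp add: \<sigma>_def e_def frac_def algebra_simps)
  then have frac: "(\<lambda>x. f (x + s *\<^sub>R e)) = (\<lambda>x. f (x + \<sigma> *\<^sub>R e))"
    by (simp add: periodic3_add_int[OF per])
  have eB: "e \<in> Basis" by (simp add: e_def)
  have ie: "x \<bullet> e = x $ j" for x by (simp add: e_def inner_axis)
  have ei: "e $ i = (if i = j then 1 else 0)" for i by (simp add: e_def axis_def)
  have int: "f integrable_on cbox a b" for a b
    by (rule integrable_continuous) (rule continuous_on_subset[OF cont], simp)
  have shift: "integral (cbox (a + d) (b + d)) f = integral (cbox a b) (\<lambda>x. f (x + d))" for a b d :: "real^3"
    using has_integral_shift_cbox_iff[of f d "integral (cbox (a + d) (b + d)) f" a b] int
    by (simp add: o_def add.commute integral_unique integrable_integral)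
  define Bx where "Bx = cbox (\<sigma> *\<^sub>R e) (One + \<sigma> *\<^sub>R e)"
  define b' :: "real^3" where "b' = (\<chi> i. if i = j then \<sigma> else 1)"
  have "integral (cbox 0 One) (\<lambda>x. f (x + \<sigma> *\<^sub>R e)) = integral Bx f"
    using shift[of 0 "\<sigma> *\<^sub>R e" One] by (simp add: Bx_def)
  also have "\<dots> = integral (Bx \<inter> {x. x \<bullet> e \<le> 1}) f + integral (Bx \<inter> {x. x \<bullet> e \<ge> 1}) f"
    unfolding Bx_def by (rule integral_split[OF int eB])
  also have "Bx \<inter> {x. x \<bullet> e \<le> 1} = cbox 0 One \<inter> {x. x \<bullet> e \<ge> \<sigma>}"
    unfolding Bx_def using \<sigma> by (auto simp: mem_box_cart ie ei split: if_splits; smt (verit))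
  also have "Bx \<inter> {x. x \<bullet> e \<ge> 1} = cbox (0 + e) (b' + e)"
    unfolding Bx_def b'_def using \<sigma> by (auto simp: mem_box_cart ie ei split: if_splits; smt (verit))
  also have "integral (cbox (0 + e) (b' + e)) f = integral (cbox 0 b') f"
    unfolding shift using per by (simp add: periodic3_def e_def)
  also have "cbox 0 b' = cbox 0 One \<inter> {x. x \<bullet> e \<le> \<sigma>}"
    unfolding b'_def using \<sigma> by (auto simp: mem_box_cart ie split: if_splits; smt (verit))
  also have "integral (cbox 0 One \<inter> {x. x \<bullet> e \<ge> \<sigma>}) f + integral (cbox 0 One \<inter> {x. x \<bullet> e \<le> \<sigma>}) f
      = integral (cbox 0 One) f"
    using integral_split[OF int eB, of 0 One \<sigma>] by simp
  finally show ?thesis unfolding frac[unfolded e_def] e_def .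
qed

lemma tint_pd_periodic3:
  fixes F :: "real^3 \<Rightarrow> real"
  assumes per: "periodic3 F" and diff: "\<And>y. F differentiable (at y)"
    and cont: "continuous_on UNIV (pd j F)"
  shows "tint (pd j F) = 0"
proof -
  define e :: "real^3" where "e = axis j 1"
  have pd: "pd j F y = dir_deriv F e y" for y
    unfolding e_def by (rule pd_eq[OF has_derivative_dir_deriv[OF diff]])
  have cF: "continuous_on UNIV F"
    using diff differentiable_imp_continuous_within continuous_at_imp_continuous_on by blast
  have "((\<lambda>s. integral (cbox 0 One) (\<lambda>x. F (x + s *\<^sub>R e))) has_real_derivative
      integral (cbox 0 One) (\<lambda>x. pd j F (x + 0 *\<^sub>R e))) (at 0)"
  proof (rule has_real_derivative_integral_parameter[where U=UNIV and f'="\<lambda>s x. pd j F (x + s *\<^sub>R e)"])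
    show "((\<lambda>s. F (x + s *\<^sub>R e)) has_real_derivative pd j F (x + s *\<^sub>R e)) (at s)" for s x
      unfolding pd by (rule has_real_derivative_along_line[OF has_derivative_dir_deriv[OF diff]])
    show "(\<lambda>x. F (x + s *\<^sub>R e)) integrable_on cbox 0 One" for s
      by (rule integrable_continuous) (auto intro!: continuous_on_compose2[OF cF] continuous_intros)
    show "continuous_on (UNIV \<times> cbox 0 One) (\<lambda>(s, x). pd j F (x + s *\<^sub>R e))"
      by (auto intro!: continuous_on_compose2[OF cont] continuous_intros simp: split_beta)
  qed auto
  moreover have "(\<lambda>s. integral (cbox 0 One) (\<lambda>x. F (x + s *\<^sub>R e))) = (\<lambda>s. integral (cbox 0 One) F)"
    unfolding e_def by (simp add: integral_periodic3_translate[OF per cF])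
  ultimately have "((\<lambda>s. integral (cbox 0 One) F) has_real_derivative integral (cbox 0 One) (pd j F)) (at 0)"
    by simp
  from DERIV_unique[OF this DERIV_const] show ?thesis by (simp add: tint_def)
qed


lemma integrable_cube:
  fixes f :: "real^3 \<Rightarrow> real"
  assumes "continuous_on UNIV f" shows "f integrable_on cbox 0 One"
  by (rule integrable_continuous[OF continuous_on_subset[OF assms]]) simp

definition beta :: "real \<Rightarrow> real \<Rightarrow> real" where
  "beta K a = (1 - K) / (1 - K * a)"

definition beta' :: "real \<Rightarrow> real \<Rightarrow> real" where
  "beta' K a = (1 - K) * K / (1 - K * a)\<^sup>2"

definition g_coeff :: "real \<Rightarrow> real \<Rightarrow> real" where
  "g_coeff K a = a - beta K a * a * a"

definition g_coeff' :: "real \<Rightarrow> real \<Rightarrow> real" where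
  "g_coeff' K a = 1 - beta' K a * a * a - 2 * beta K a * a"

definition q_coeff :: "real \<Rightarrow> real \<Rightarrow> real" where
  "q_coeff K a = (1 - beta K a) * a"

definition q_coeff' :: "real \<Rightarrow> real \<Rightarrow> real" where
  "q_coeff' K a = 1 - beta K a - beta' K a * a"

definition p_coeff :: "real \<Rightarrow> real \<Rightarrow> real" where
  "p_coeff K a = - (K / (1 + K)) * (1 - a) + (1 - K) / (1 + K) * q_coeff K a"

definition p_coeff' :: "real \<Rightarrow> real \<Rightarrow> real" where
  "p_coeff' K a = K / (1 + K) + (1 - K) / (1 + K) * q_coeff' K a"

lemma beta_deriv: "1 - K * a \<noteq> 0 \<Longrightarrow> (beta K has_real_derivative beta' K a) (at a)"
  unfolding beta_def[abs_def] beta'_def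
  by (auto intro!: derivative_eq_intros simp: power2_eq_square field_simps)

lemma g_coeff_deriv: "1 - K * a \<noteq> 0 \<Longrightarrow> (g_coeff K has_real_derivative g_coeff' K a) (at a)"
  unfolding g_coeff_def[abs_def] g_coeff'_def
  by (auto intro!: derivative_eq_intros beta_deriv simp: algebra_simps)

lemma q_coeff_deriv: "1 - K * a \<noteq> 0 \<Longrightarrow> (q_coeff K has_real_derivative q_coeff' K a) (at a)"
  unfolding q_coeff_def[abs_def] q_coeff'_def
  by (auto intro!: derivative_eq_intros beta_deriv simp: algebra_simps)

lemma p_coeff_deriv:
  assumes "1 - K * a \<noteq> 0" shows "(p_coeff K has_real_derivative p_coeff' K a) (at a)"
proof -
  have "((\<lambda>a. - (K / (1 + K)) * (1 - a) + (1 - K) / (1 + K) * q_coeff K a) has_real_derivative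
      - (K / (1 + K)) * (0 - 1) + (1 - K) / (1 + K) * q_coeff' K a) (at a)"
    by (intro DERIV_add DERIV_cmult DERIV_diff DERIV_const DERIV_ident q_coeff_deriv assms)
  then show ?thesis by (simp add: p_coeff_def[abs_def] p_coeff'_def)
qed

lemma p_coeff_eq:
  assumes "1 - K * a \<noteq> 0" "1 + K \<noteq> 0"
  shows "p_coeff K a = - (K / (1 + K)) * (1 - a)\<^sup>2 / (1 - K * a)"
proof -
  have h: "1 - beta K a = K * (1 - a) / (1 - K * a)" using assms(1) by (simp add: beta_def field_simps)
  have "p_coeff K a = - (K / (1 + K)) * (1 - a) + (1 - K) / (1 + K) * (K * (1 - a) / (1 - K * a) * a)"
    unfolding p_coeff_def q_coeff_def h ..
  also have "\<dots> = - (K / (1 + K)) * (1 - a)\<^sup>2 / (1 - K * a)"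
    using assms by (simp add: divide_simps power2_eq_square) (simp add: algebra_simps)
  finally show ?thesis .
qed

context
  fixes K a :: real
  assumes K: "0 \<le> K" "K \<le> 1/3" and a: "0 \<le> a" "a \<le> 1/100"
begin

lemma one_minus_K_mult_ge: "1 - K * a \<ge> 99/100"
  using mult_mono[of K "1/3" a "1/100"] K a by simp

lemma beta_bounds: "0 \<le> beta K a" "beta K a \<le> 1"
  using one_minus_K_mult_ge K a mult_left_le[of a K] by (auto simp: beta_def)

lemma beta'_bounds: "0 \<le> beta' K a" "beta' K a \<le> 1"
proof -
  have "(1 - K) * K \<le> 1 * (1/3)" using K by (intro mult_mono) auto
  moreover have "(99/100)\<^sup>2 \<le> (1 - K * a)\<^sup>2" using one_minus_K_mult_ge by (intro power_mono) auto
  ultimately have "beta' K a \<le> (1/3) / (99/100)\<^sup>2"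
    unfolding beta'_def using K by (intro frac_le) auto
  then show "beta' K a \<le> 1" by (simp add: power2_eq_square)
  show "0 \<le> beta' K a" unfolding beta'_def using K by simp
qed

lemma coeff_bounds:
  "\<bar>g_coeff K a\<bar> \<le> 2 * a" "\<bar>q_coeff K a\<bar> \<le> a" "\<bar>p_coeff K a\<bar> \<le> 2"
  "\<bar>g_coeff' K a\<bar> \<le> 3" "\<bar>q_coeff' K a\<bar> \<le> 2" "\<bar>p_coeff' K a\<bar> \<le> 3"
proof -
  note b = beta_bounds and b' = beta'_bounds
  have ba: "0 \<le> beta K a * a" "beta K a * a \<le> a" using b a mult_left_le_one_le by auto
  have b'a: "0 \<le> beta' K a * a" "beta' K a * a \<le> 1/100"
    using b' a mult_mono[of "beta' K a" 1 a "1/100"] by auto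
  have b'aa: "0 \<le> beta' K a * a * a" "beta' K a * a * a \<le> 1"
    using b'a a mult_mono[of "beta' K a * a" 1 a 1] by auto
  have k: "\<bar>K / (1 + K)\<bar> \<le> 1" "\<bar>(1 - K) / (1 + K)\<bar> \<le> 1"
    using K by auto
  have "beta K a * a * a \<le> a" "0 \<le> beta K a * a * a"
    using ba a mult_mono[of "beta K a * a" a a 1] by auto
  then show g: "\<bar>g_coeff K a\<bar> \<le> 2 * a"
    using \<open>0 \<le> beta K a * a * a\<close> a by (auto simp: g_coeff_def)
  show q: "\<bar>q_coeff K a\<bar> \<le> a"
    using ba by (auto simp: q_coeff_def algebra_simps)
  show "\<bar>g_coeff' K a\<bar> \<le> 3"
    using b'aa ba a by (auto simp: g_coeff'_def)
  show q': "\<bar>q_coeff' K a\<bar> \<le> 2"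
    using b b'a by (auto simp: q_coeff'_def)
  have "\<bar>(1 - K) / (1 + K) * q_coeff K a\<bar> \<le> 1 * 1"
    unfolding abs_mult using q k a by (intro mult_mono) auto
  moreover have "\<bar>K / (1 + K) * (1 - a)\<bar> \<le> 1 * 1"
    unfolding abs_mult using k a by (intro mult_mono) auto
  ultimately show "\<bar>p_coeff K a\<bar> \<le> 2" unfolding p_coeff_def by linarith
  have "\<bar>(1 - K) / (1 + K) * q_coeff' K a\<bar> \<le> 1 * 2"
    unfolding abs_mult using q' k by (intro mult_mono) auto
  then show "\<bar>p_coeff' K a\<bar> \<le> 3" unfolding p_coeff'_def using k by (smt (verit))
qed

end


lemma abs_sum_mult_le:
  "\<bar>\<Sum>i\<in>A. x i * y i\<bar> \<le> sqrt (\<Sum>i\<in>A. (x i)\<^sup>2) * sqrt (\<Sum>i\<in>A. (y i)\<^sup>2)"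
proof -
  have "\<bar>\<Sum>i\<in>A. x i * y i\<bar> \<le> (\<Sum>i\<in>A. \<bar>x i\<bar> * \<bar>y i\<bar>)"
    using sum_abs[of "\<lambda>i. x i * y i" A] by (simp add: abs_mult)
  also have "\<dots> \<le> L2_set x A * L2_set y A" by (rule L2_set_mult_ineq)
  finally show ?thesis by (simp add: L2_set_def)
qed

lemma sum_square_matrix_vector_le:
  fixes f :: "'n::finite \<Rightarrow> real" and A :: "'m::finite \<Rightarrow> 'n \<Rightarrow> real"
  shows "(\<Sum>i\<in>UNIV. (\<Sum>m\<in>UNIV. f m * A i m)\<^sup>2) \<le> (\<Sum>m\<in>UNIV. (f m)\<^sup>2) * (\<Sum>i\<in>UNIV. \<Sum>m\<in>UNIV. (A i m)\<^sup>2)"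
proof -
  have "(\<Sum>i\<in>UNIV. (\<Sum>m\<in>UNIV. f m * A i m)\<^sup>2)
      \<le> (\<Sum>i\<in>UNIV. (\<Sum>m\<in>UNIV. (f m)\<^sup>2) * (\<Sum>m\<in>UNIV. (A i m)\<^sup>2))"
    by (intro sum_mono Cauchy_Schwarz_ineq_sum)
  then show ?thesis by (simp add: sum_distrib_left)
qed

lemma abs_quadratic_form_le:
  fixes w :: "'n::finite \<Rightarrow> real" and A :: "'n \<Rightarrow> 'n \<Rightarrow> real"
  shows "\<bar>\<Sum>i\<in>UNIV. \<Sum>j\<in>UNIV. w i * A i j * w j\<bar>
    \<le> (\<Sum>i\<in>UNIV. (w i)\<^sup>2) * sqrt (\<Sum>i\<in>UNIV. \<Sum>j\<in>UNIV. (A i j)\<^sup>2)"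
proof -
  define W a where "W = (\<Sum>i\<in>UNIV. (w i)\<^sup>2)" and "a = (\<Sum>i\<in>UNIV. \<Sum>j\<in>UNIV. (A i j)\<^sup>2)"
  define z where "z i = (\<Sum>j\<in>UNIV. w j * A i j)" for i
  have W0: "0 \<le> W" by (simp add: W_def sum_nonneg)
  have "(\<Sum>i\<in>UNIV. \<Sum>j\<in>UNIV. w i * A i j * w j) = (\<Sum>i\<in>UNIV. w i * z i)"
    by (simp add: z_def sum_distrib_left mult_ac)
  also have "\<bar>\<dots>\<bar> \<le> sqrt W * sqrt (\<Sum>i\<in>UNIV. (z i)\<^sup>2)"
    unfolding W_def by (rule abs_sum_mult_le)
  also have "\<dots> \<le> sqrt W * sqrt (W * a)"
    using sum_square_matrix_vector_le[of w A] W0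
    by (intro mult_left_mono real_sqrt_le_mono) (simp_all add: z_def W_def a_def)
  also have "\<dots> = W * sqrt a"
    using W0 by (simp add: real_sqrt_mult mult.assoc[symmetric])
  finally show ?thesis by (simp add: W_def a_def)
qed

lemma abs_trace_le:
  fixes A :: "'n::finite \<Rightarrow> 'n \<Rightarrow> real"
  shows "\<bar>\<Sum>j\<in>UNIV. A j j\<bar> \<le> sqrt CARD('n) * sqrt (\<Sum>i\<in>UNIV. \<Sum>j\<in>UNIV. (A i j)\<^sup>2)"
proof -
  have "\<bar>\<Sum>j\<in>UNIV. A j j\<bar> \<le> sqrt CARD('n) * sqrt (\<Sum>j\<in>UNIV. (A j j)\<^sup>2)"
    using abs_sum_mult_le[of "\<lambda>_. 1" "\<lambda>j. A j j" UNIV] by simp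
  also have "(\<Sum>j\<in>UNIV. (A j j)\<^sup>2) \<le> (\<Sum>i\<in>UNIV. \<Sum>j\<in>UNIV. (A i j)\<^sup>2)"
    by (intro sum_mono member_le_sum) auto
  then have "sqrt CARD('n) * sqrt (\<Sum>j\<in>UNIV. (A j j)\<^sup>2)
      \<le> sqrt CARD('n) * sqrt (\<Sum>i\<in>UNIV. \<Sum>j\<in>UNIV. (A i j)\<^sup>2)"
    by (intro mult_left_mono real_sqrt_le_mono) auto
  finally show ?thesis .
qed

definition remainder ::
    "real \<Rightarrow> real \<Rightarrow> real \<Rightarrow> real \<Rightarrow> real \<Rightarrow> real \<Rightarrow> real \<Rightarrow> real \<Rightarrow> real \<Rightarrow> real \<Rightarrow> real" where
  "remainder K \<phi> c \<tau> u W P S Dv Q =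
     u * W / (1 - \<phi>)\<^sup>2 + c * W * (1 - 2 * g_coeff' K \<phi>) / (1 - \<phi>)
     + \<tau> * (2 * p_coeff' K \<phi> * P * W + 2 * q_coeff' K \<phi> * Dv * W - Q) / (1 - \<phi>)
     + \<tau> / 2 * (Dv * W / (1 - \<phi>) + 2 * S * W / (1 - \<phi>)\<^sup>2)"

lemma remainder_identity:
  assumes nz: "1 - \<phi> \<noteq> 0" "1 - K * \<phi> \<noteq> 0" "1 + K \<noteq> 0"
    and wdu: "wdu = - 2 * c * g_coeff' K \<phi> * W + \<tau> * (2 * p_coeff' K \<phi> * P * W + p_coeff K \<phi> * X
      - (Q + Z / 2) + 2 * q_coeff' K \<phi> * Dv * W + q_coeff K \<phi> * Y)"
  shows "u * W / (1 - \<phi>)\<^sup>2 + wdu / (1 - \<phi>) + c * (W / (1 - \<phi>))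
      + K / (1 + K) * \<tau> * (X * (1 - \<phi>) / (1 - K * \<phi>)) - \<tau> * (Y / (1 - \<phi>) * \<phi> * (1 - beta K \<phi>))
      + \<tau> / 2 * (Dv * W / (1 - \<phi>) + Z / (1 - \<phi>) + 2 * S * W / (1 - \<phi>)\<^sup>2)
    = remainder K \<phi> c \<tau> u W P S Dv Q"
proof -
  have p: "p_coeff K \<phi> * X / (1 - \<phi>) = - (K / (1 + K) * (X * (1 - \<phi>) / (1 - K * \<phi>)))"
    using nz by (simp add: p_coeff_eq power2_eq_square)
  have q: "q_coeff K \<phi> * Y / (1 - \<phi>) = Y / (1 - \<phi>) * \<phi> * (1 - beta K \<phi>)"
    by (simp add: q_coeff_def)
  have split: "wdu / (1 - \<phi>) = (- 2 * c * g_coeff' K \<phi> * W + \<tau> * (2 * p_coeff' K \<phi> * P * W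
      - (Q + Z / 2) + 2 * q_coeff' K \<phi> * Dv * W)) / (1 - \<phi>)
      + \<tau> * (p_coeff K \<phi> * X / (1 - \<phi>)) + \<tau> * (q_coeff K \<phi> * Y / (1 - \<phi>))"
    unfolding wdu by (simp add: add_divide_distrib diff_divide_distrib algebra_simps)
  show ?thesis
    unfolding remainder_def split p q by (simp add: add_divide_distrib diff_divide_distrib algebra_simps)
qed

lemma abs_mult_le_mult:
  fixes a b A B :: real
  assumes "\<bar>a\<bar> \<le> A" "\<bar>b\<bar> \<le> B"
  shows "\<bar>a * b\<bar> \<le> A * B"
  unfolding abs_mult using assms by (intro mult_mono) (auto intro: order_trans[OF abs_ge_zero])

lemma remainder_bound:
  fixes K \<phi> r c \<tau> u W P S Dv Q X Y Z sa sl :: real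
  assumes K: "0 \<le> K" "K \<le> 1/3" and r: "0 \<le> r" "r \<le> 1/10" "\<phi> = r\<^sup>2"
    and c: "0 \<le> c" and \<tau>: "0 \<le> \<tau>" and sa: "0 \<le> sa"
    and W: "0 \<le> W" "W \<le> X" "sa * W \<le> Y" "r * sl * W \<le> Z"
    and P: "\<bar>P\<bar> \<le> r * sl" and S: "\<bar>S\<bar> \<le> r\<^sup>2 * sa" and Dv: "\<bar>Dv\<bar> \<le> 2 * sa" and Q: "\<bar>Q\<bar> \<le> W * sa"
    and u: "u = - c * g_coeff K \<phi> + \<tau> * (p_coeff K \<phi> * P - S + q_coeff K \<phi> * Dv)"
  shows "\<bar>remainder K \<phi> c \<tau> u W P S Dv Q\<bar> \<le> 30 * (c + \<tau>) * (X + Y + Z)"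
proof -
  have r2: "r\<^sup>2 \<le> 1/100" using power_mono[OF r(2) r(1), of 2] by (simp add: power2_eq_square)
  have \<phi>: "0 \<le> \<phi>" "\<phi> \<le> 1/100" using r(3) r2 by auto
  note cb = coeff_bounds[OF K \<phi>]
  define \<iota> \<iota>2 where "\<iota> = 1 / (1 - \<phi>)" and "\<iota>2 = 1 / (1 - \<phi>)\<^sup>2"
  have \<iota>: "\<bar>\<iota>\<bar> \<le> 2" "\<bar>\<iota>2\<bar> \<le> 2"
  proof -
    have "(99/100)\<^sup>2 \<le> (1 - \<phi>)\<^sup>2" using \<phi> by (intro power_mono) auto
    then show "\<bar>\<iota>\<bar> \<le> 2" "\<bar>\<iota>2\<bar> \<le> 2" using \<phi> by (auto simp: \<iota>_def \<iota>2_def field_simps power2_eq_square)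
  qed
  have PW: "\<bar>P * W\<bar> \<le> Z" using mult_right_mono[OF P W(1)] W(1,4) by (simp add: abs_mult)
  have SW: "\<bar>S * W\<bar> \<le> Y"
    using mult_right_mono[OF S W(1)] mult_right_mono[of "r\<^sup>2" 1 "sa * W"] r2 sa W(1,3)
    by (simp add: abs_mult mult.assoc)
  have DW: "\<bar>Dv * W\<bar> \<le> 2 * Y" using mult_right_mono[OF Dv W(1)] W(1,3) by (simp add: abs_mult)
  have QY: "\<bar>Q\<bar> \<le> Y" using Q W(3) by (simp add: mult.commute)
  have \<phi>W: "\<phi> * W \<le> X" using mult_right_mono[OF \<phi>(2) W(1)] W(1,2) by simp
  have uW: "\<bar>u * W\<bar> \<le> 2 * c * X + \<tau> * (2 * Z + 3 * Y)"
  proof -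
    have gW: "\<bar>g_coeff K \<phi> * W\<bar> \<le> 2 * X"
      using mult_right_mono[OF cb(1) W(1)] \<phi>W W(1) by (simp add: abs_mult mult.assoc)
    have pPW: "\<bar>p_coeff K \<phi> * (P * W)\<bar> \<le> 2 * Z" by (rule abs_mult_le_mult[OF cb(3) PW])
    have qDW: "\<bar>q_coeff K \<phi> * (Dv * W)\<bar> \<le> 1 * (2 * Y)"
      using cb(2) \<phi> by (intro abs_mult_le_mult[OF _ DW]) linarith
    have "\<bar>p_coeff K \<phi> * (P * W) - S * W + q_coeff K \<phi> * (Dv * W)\<bar> \<le> 2 * Z + 3 * Y"
      using pPW SW qDW by linarith
    then have "\<bar>\<tau> * (p_coeff K \<phi> * (P * W) - S * W + q_coeff K \<phi> * (Dv * W))\<bar> \<le> \<tau> * (2 * Z + 3 * Y)"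
      using \<tau> by (simp add: abs_mult mult_left_mono)
    moreover have "\<bar>c * (g_coeff K \<phi> * W)\<bar> \<le> c * (2 * X)"
      using gW c by (simp add: abs_mult mult_left_mono)
    moreover have "u * W = - (c * (g_coeff K \<phi> * W))
        + \<tau> * (p_coeff K \<phi> * (P * W) - S * W + q_coeff K \<phi> * (Dv * W))"
      by (simp add: u algebra_simps)
    ultimately show ?thesis by linarith
  qed
  have eq: "remainder K \<phi> c \<tau> u W P S Dv Q = (u * W) * \<iota>2 + (c * W) * (1 - 2 * g_coeff' K \<phi>) * \<iota>
      + \<tau> * (2 * p_coeff' K \<phi> * (P * W) + 2 * q_coeff' K \<phi> * (Dv * W) - Q) * \<iota>
      + \<tau> / 2 * ((Dv * W) * \<iota> + 2 * (S * W) * \<iota>2)"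
    by (simp add: remainder_def \<iota>_def \<iota>2_def mult.assoc)
  have bound: "\<bar>(u * W) * \<iota>2 + (c * W) * (1 - 2 * g_coeff' K \<phi>) * \<iota>
      + \<tau> * (2 * p_coeff' K \<phi> * (P * W) + 2 * q_coeff' K \<phi> * (Dv * W) - Q) * \<iota>
      + \<tau> / 2 * ((Dv * W) * \<iota> + 2 * (S * W) * \<iota>2)\<bar> \<le> (2 * c * X + \<tau> * (2 * Z + 3 * Y)) * 2 + (c * X) * 7 * 2
      + \<tau> * (2 * 3 * Z + 2 * 2 * (2 * Y) + Y) * 2 + \<tau> / 2 * ((2 * Y) * 2 + 2 * Y * 2)"
  proof -
    have cW: "\<bar>c * W\<bar> \<le> c * X" using c W(1,2) by (simp add: abs_mult mult_left_mono)
    have g7: "\<bar>1 - 2 * g_coeff' K \<phi>\<bar> \<le> 7" using cb(4) by linarith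
    have B3: "\<bar>2 * p_coeff' K \<phi> * (P * W) + 2 * q_coeff' K \<phi> * (Dv * W) - Q\<bar>
        \<le> 2 * 3 * Z + 2 * 2 * (2 * Y) + Y"
      using abs_mult_le_mult[OF abs_mult_le_mult[of 2 2 "p_coeff' K \<phi>" 3] PW]
        abs_mult_le_mult[OF abs_mult_le_mult[of 2 2 "q_coeff' K \<phi>" 2] DW] cb(5,6) QY by linarith
    have "\<bar>Dv * W * \<iota> + 2 * (S * W) * \<iota>2\<bar> \<le> 2 * Y * 2 + 2 * Y * 2"
      using abs_mult_le_mult[OF DW \<iota>(1)] abs_mult_le_mult[OF abs_mult_le_mult[of 2 2, OF _ SW] \<iota>(2)]
      by linarith
    then have B4: "\<bar>\<tau> / 2 * (Dv * W * \<iota> + 2 * (S * W) * \<iota>2)\<bar> \<le> \<tau> / 2 * (2 * Y * 2 + 2 * Y * 2)"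
      using \<tau> by (intro abs_mult_le_mult) auto
    show ?thesis
      using abs_mult_le_mult[OF uW \<iota>(2)] abs_mult_le_mult[OF abs_mult_le_mult[OF cW g7] \<iota>(1)]
        abs_mult_le_mult[OF abs_mult_le_mult[OF _ B3] \<iota>(1), of \<tau> \<tau>] \<tau> B4
      by (smt (verit))
  qed
  moreover have "(2 * c * X + \<tau> * (2 * Z + 3 * Y)) * 2 + (c * X) * 7 * 2
      + \<tau> * (2 * 3 * Z + 2 * 2 * (2 * Y) + Y) * 2 + \<tau> / 2 * ((2 * Y) * 2 + 2 * Y * 2)
      \<le> 30 * (c + \<tau>) * (X + Y + Z)"
  proof -
    have "0 \<le> Y" "0 \<le> Z" using W(1,3,4) PW SW by (auto intro: order_trans[OF abs_ge_zero])
    then have "0 \<le> c * X" "0 \<le> c * Y" "0 \<le> c * Z" "0 \<le> \<tau> * X" "0 \<le> \<tau> * Y" "0 \<le> \<tau> * Z"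
      using c \<tau> W(1,2) by auto
    then show ?thesis by (simp add: algebra_simps)
  qed
  ultimately show ?thesis unfolding eq by linarith
qed

locale euler_solution =
  fixes \<alpha> K t0 t1 :: real and v :: "real \<Rightarrow> real^3 \<Rightarrow> real^3" and L :: "real \<Rightarrow> real^3 \<Rightarrow> real"
  assumes alpha_pos: "0 < \<alpha>" and K_nonneg: "0 \<le> K" and K_le: "K \<le> 1/3" and t0_nonneg: "0 \<le> t0"
    and smooth_v: "\<And>m. smooth_on ({t0<..<t1} \<times> UNIV) (\<lambda>(t, x). v t x $ m)"
    and smooth_L: "smooth_on ({t0<..<t1} \<times> UNIV) (\<lambda>(t, x). L t x)"
    and periodic_v: "\<And>t. t \<in> {t0<..<t1} \<Longrightarrow> periodic3 (v t)"
    and small_v: "\<And>t x. t \<in> {t0<..<t1} \<Longrightarrow> norm (v t x) < 1/10"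
    and velocity_eq: "\<And>t x i. t \<in> {t0<..<t1} \<Longrightarrow>
          dtd (\<lambda>s y. v s y $ i) t x =
            - (\<alpha> * (1 - 3*K) / t) * v t x $ i
            - K / (1 + K) * t powr (-\<alpha>) * (1 - (norm (v t x))\<^sup>2) * pd i (L t) x
            - t powr (-\<alpha>) * (\<Sum>j\<in>UNIV. v t x $ j * pd j (\<lambda>y. v t y $ i) x)
            + t powr (-\<alpha>) * (1 - (1 - K) / (1 - K * (norm (v t x))\<^sup>2)) * v t x $ i
                * (\<Sum>j\<in>UNIV. pd j (\<lambda>y. v t y $ j) x)
            + t powr (-\<alpha>) * (1 - K) / (1 + K) * (1 - (1 - K) / (1 - K * (norm (v t x))\<^sup>2))
                * v t x $ i * (\<Sum>j\<in>UNIV. v t x $ j * pd j (L t) x)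
            + \<alpha> * (1 - 3*K) / t * (1 - K) / (1 - K * (norm (v t x))\<^sup>2)
                * (norm (v t x))\<^sup>2 * v t x $ i"
begin

abbreviation "I \<equiv> {t0<..<t1}"
abbreviation "\<Omega> \<equiv> I \<times> (UNIV :: (real^3) set)"

definition vel :: "3 \<Rightarrow> real \<times> (real^3) \<Rightarrow> real" where
  "vel m = (\<lambda>(s, x). v s x $ m)"

definition Lfun :: "real \<times> (real^3) \<Rightarrow> real" where
  "Lfun = (\<lambda>(s, x). L s x)"

definition vsq :: "real \<times> (real^3) \<Rightarrow> real" where
  "vsq = (\<lambda>z. \<Sum>m\<in>UNIV. vel m z * vel m z)"

definition w :: "3 \<Rightarrow> real \<times> (real^3) \<Rightarrow> real" where
  "w i = (\<lambda>z. \<Sum>m\<in>UNIV. vel m z * dx i (vel m) z)"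

definition Wsq :: "real \<times> (real^3) \<Rightarrow> real" where
  "Wsq = (\<lambda>z. \<Sum>i\<in>UNIV. w i z * w i z)"

definition u :: "real \<times> (real^3) \<Rightarrow> real" where
  "u = (\<lambda>z. \<Sum>m\<in>UNIV. vel m z * dt (vel m) z)"

definition vdL :: "real \<times> (real^3) \<Rightarrow> real" where
  "vdL = (\<lambda>z. \<Sum>n\<in>UNIV. vel n z * dx n Lfun z)"

definition divv :: "real \<times> (real^3) \<Rightarrow> real" where
  "divv = (\<lambda>z. \<Sum>j\<in>UNIV. dx j (vel j) z)"

definition vw :: "real \<times> (real^3) \<Rightarrow> real" where
  "vw = (\<lambda>z. \<Sum>j\<in>UNIV. vel j z * w j z)"

lemma open_\<Omega>: "open \<Omega>"
  by (intro open_Times open_greaterThanLessThan open_UNIV)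

lemma smooth_on_vel: "smooth_on \<Omega> (vel m)"
  using smooth_v by (simp add: vel_def)

lemma smooth_on_Lfun: "smooth_on \<Omega> Lfun"
  using smooth_L by (simp add: Lfun_def)

lemmas smooth_on_arith = smooth_on_sum[OF open_\<Omega>] smooth_on_mult[OF open_\<Omega>] smooth_on_dx smooth_on_dt
  smooth_on_vel smooth_on_Lfun

lemma smooth_on_quantities:
  "smooth_on \<Omega> vsq" "smooth_on \<Omega> (w i)" "smooth_on \<Omega> Wsq" "smooth_on \<Omega> u"
  "smooth_on \<Omega> vdL" "smooth_on \<Omega> divv" "smooth_on \<Omega> vw"
  unfolding vsq_def w_def Wsq_def u_def vdL_def divv_def vw_def by (intro smooth_on_arith)+

lemma differentiable_at_\<Omega>: "smooth_on \<Omega> f \<Longrightarrow> z \<in> \<Omega> \<Longrightarrow> f differentiable (at z)"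
  by (rule smooth_on_imp_differentiable_at[OF _ open_\<Omega>])

lemma continuous_on_\<Omega>: "smooth_on \<Omega> f \<Longrightarrow> continuous_on \<Omega> f"
  by (rule smooth_on_imp_continuous_on)

lemma vsq_bounds: "z \<in> \<Omega> \<Longrightarrow> 0 \<le> vsq z \<and> vsq z < 1/100"
proof -
  assume "z \<in> \<Omega>"
  then obtain s x where z: "z = (s, x)" and s: "s \<in> I" by auto
  have "(norm (v s x))\<^sup>2 < (1/10)\<^sup>2" using small_v[OF s] by (intro power_strict_mono) auto
  moreover have "vsq z = (norm (v s x))\<^sup>2"
    unfolding power2_norm_eq_inner by (simp add: z vsq_def vel_def inner_vec_def)
  ultimately show ?thesis by (simp add: power2_eq_square sum_nonneg vsq_def)
qed

lemma vel_Pair [simp]: "vel m (s, x) = v s x $ m"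
  by (simp add: vel_def)

lemma Lfun_Pair [simp]: "Lfun (s, x) = L s x"
  by (simp add: Lfun_def)

lemma norm_v_sq: "(norm (v s x))\<^sup>2 = vsq (s, x)"
  unfolding power2_norm_eq_inner by (simp add: vsq_def inner_vec_def)

lemma pd_v: "s \<in> I \<Longrightarrow> pd i (\<lambda>y. v s y $ m) y = dx i (vel m) (s, y)"
  using pd_space_slice[OF differentiable_at_\<Omega>[OF smooth_on_vel], of s y i m] by simp

lemma pd_L: "s \<in> I \<Longrightarrow> pd i (L s) y = dx i Lfun (s, y)"
  using pd_space_slice[OF differentiable_at_\<Omega>[OF smooth_on_Lfun], of s y i] by (simp add: eta_contract_eq)

lemma wv_eq: "s \<in> I \<Longrightarrow> wv v s i x = w i (s, x)"
  by (simp add: wv_def w_def pd_v)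

lemma dtd_v: "s \<in> I \<Longrightarrow> dtd (\<lambda>s y. v s y $ m) s x = dt (vel m) (s, x)"
  using DERIV_time_slice[OF differentiable_at_\<Omega>[OF smooth_on_vel], of s x m]
  by (simp add: dtd_def DERIV_imp_deriv)

lemma dir_deriv_sum_mult_\<Omega>:
  assumes "\<And>m. smooth_on \<Omega> (f m)" "\<And>m. smooth_on \<Omega> (g m)" "z \<in> \<Omega>"
  shows "dir_deriv (\<lambda>z. \<Sum>m\<in>A. f m z * g m z) b z
    = (\<Sum>m\<in>A. dir_deriv (f m) b z * g m z + f m z * dir_deriv (g m) b z)"
  by (intro dir_deriv_sum_mult differentiable_at_\<Omega> assms)

lemma dx_vsq: "z \<in> \<Omega> \<Longrightarrow> dx k vsq z = 2 * w k z"
  unfolding vsq_def w_def dx_def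
  by (simp add: dir_deriv_sum_mult_\<Omega> smooth_on_vel sum_distrib_left algebra_simps flip: sum.distrib)

lemma dt_vsq: "z \<in> \<Omega> \<Longrightarrow> dt vsq z = 2 * u z"
  unfolding vsq_def u_def dt_def
  by (simp add: dir_deriv_sum_mult_\<Omega> smooth_on_vel sum_distrib_left algebra_simps flip: sum.distrib)

lemma dt_w: "z \<in> \<Omega> \<Longrightarrow> dt (w k) z = dx k u z"
proof -
  assume z: "z \<in> \<Omega>"
  have "dt (w k) z = (\<Sum>m\<in>UNIV. dt (vel m) z * dx k (vel m) z + vel m z * dt (dx k (vel m)) z)"
    unfolding w_def dt_def by (rule dir_deriv_sum_mult_\<Omega>[OF smooth_on_vel smooth_on_dx[OF smooth_on_vel] z])
  also have "\<dots> = (\<Sum>m\<in>UNIV. dx k (vel m) z * dt (vel m) z + vel m z * dx k (dt (vel m)) z)"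
    using dt_dx_commute[OF smooth_on_vel open_\<Omega> z] by (simp add: mult.commute)
  also have "\<dots> = dx k u z"
    unfolding u_def dx_def by (rule dir_deriv_sum_mult_\<Omega>[symmetric, OF smooth_on_vel smooth_on_dt[OF smooth_on_vel] z])
  finally show ?thesis .
qed

lemma dx_w_commute: "z \<in> \<Omega> \<Longrightarrow> dx i (w j) z = dx j (w i) z"
proof -
  assume z: "z \<in> \<Omega>"
  have "dx i (w j) z = (\<Sum>m\<in>UNIV. dx i (vel m) z * dx j (vel m) z + vel m z * dx i (dx j (vel m)) z)"
    unfolding w_def dx_def[of i]
    by (rule dir_deriv_sum_mult_\<Omega>[OF smooth_on_vel smooth_on_dx[OF smooth_on_vel] z])
  also have "\<dots> = (\<Sum>m\<in>UNIV. dx j (vel m) z * dx i (vel m) z + vel m z * dx j (dx i (vel m)) z)"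
    using dx_commute[OF smooth_on_vel open_\<Omega> z] by (simp add: mult.commute)
  also have "\<dots> = dx j (w i) z"
    unfolding w_def dx_def[of j]
    by (rule dir_deriv_sum_mult_\<Omega>[symmetric, OF smooth_on_vel smooth_on_dx[OF smooth_on_vel] z])
  finally show ?thesis .
qed

lemma dt_Wsq: "z \<in> \<Omega> \<Longrightarrow> dt Wsq z = 2 * (\<Sum>k\<in>UNIV. w k z * dx k u z)"
  unfolding Wsq_def dt_def
  by (simp add: dir_deriv_sum_mult_\<Omega> smooth_on_quantities dt_w[unfolded dt_def] sum_distrib_left
      algebra_simps flip: sum.distrib)

lemma dx_Wsq: "z \<in> \<Omega> \<Longrightarrow> dx j Wsq z = 2 * (\<Sum>k\<in>UNIV. w k z * dx k (w j) z)"
proof -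
  assume z: "z \<in> \<Omega>"
  have "dx j Wsq z = 2 * (\<Sum>k\<in>UNIV. w k z * dx j (w k) z)"
    unfolding Wsq_def dx_def
    by (simp add: dir_deriv_sum_mult_\<Omega> smooth_on_quantities z sum_distrib_left algebra_simps flip: sum.distrib)
  then show ?thesis using dx_w_commute[OF z] by simp
qed

lemma dx_vw: "z \<in> \<Omega> \<Longrightarrow> dx k vw z = (\<Sum>j\<in>UNIV. dx k (vel j) z * w j z + vel j z * dx k (w j) z)"
  unfolding vw_def dx_def by (rule dir_deriv_sum_mult_\<Omega>[OF smooth_on_vel smooth_on_quantities(2)])

lemma one_minus_vsq_pos: "z \<in> \<Omega> \<Longrightarrow> 0 < 1 - vsq z"
  using vsq_bounds by fastforce

lemma one_minus_vsq_nonzero: "\<forall>z\<in>\<Omega>. 1 - vsq z \<noteq> 0" "\<forall>z\<in>\<Omega>. (1 - vsq z)\<^sup>2 \<noteq> 0"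
  using one_minus_vsq_pos by fastforce+

definition energy_rate :: "real \<times> (real^3) \<Rightarrow> real" where
  "energy_rate z = u z * Wsq z / (1 - vsq z)\<^sup>2 + (\<Sum>k\<in>UNIV. w k z * dx k u z) / (1 - vsq z)"

lemma continuous_on_energy_rate: "continuous_on \<Omega> energy_rate"
  unfolding energy_rate_def
  by (intro continuous_intros continuous_on_\<Omega> smooth_on_quantities smooth_on_dx one_minus_vsq_nonzero)

lemma DERIV_energy_density:
  assumes "s \<in> I"
  shows "((\<lambda>s. Wsq (s, x) / (1 - vsq (s, x))) has_real_derivative 2 * energy_rate (s, x)) (at s)"
proof -
  have z: "(s, x) \<in> \<Omega>" using assms by simp
  define d where "d = 1 - vsq (s, x)"
  have d: "d \<noteq> 0" using one_minus_vsq_pos[OF z] by (simp add: d_def)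
  note slice = DERIV_time_slice[OF differentiable_at_\<Omega>[OF _ z]]
  have "((\<lambda>s. Wsq (s, x) / (1 - vsq (s, x))) has_real_derivative
      (dt Wsq (s, x) * (1 - vsq (s, x)) - Wsq (s, x) * (0 - dt vsq (s, x)))
        / ((1 - vsq (s, x)) * (1 - vsq (s, x)))) (at s)"
    using d by (intro DERIV_divide DERIV_diff DERIV_const slice smooth_on_quantities) (simp add: d_def)
  moreover have "(dt Wsq (s, x) * d - Wsq (s, x) * (0 - dt vsq (s, x))) / (d * d) = 2 * energy_rate (s, x)"
    using d by (simp add: dt_Wsq[OF z] dt_vsq[OF z] energy_rate_def d_def[symmetric] field_simps power2_eq_square)
  ultimately show ?thesis by (simp add: d_def)
qed

lemma energy_has_derivative:
  assumes t: "t \<in> I"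
  shows "((\<lambda>s. 1/2 * tint (\<lambda>x. 1 / (1 - (norm (v s x))\<^sup>2) * (\<Sum>i\<in>UNIV. wv v s i x * wv v s i x)))
    has_real_derivative tint (\<lambda>x. energy_rate (t, x))) (at t)"
proof -
  have "((\<lambda>s. integral (cbox 0 One) (\<lambda>x. Wsq (s, x) / (1 - vsq (s, x)))) has_real_derivative
      integral (cbox 0 One) (\<lambda>x. 2 * energy_rate (t, x))) (at t)"
  proof (rule has_real_derivative_integral_parameter[where U=I and f'="\<lambda>s x. 2 * energy_rate (s, x)"])
    show "((\<lambda>s. Wsq (s, x) / (1 - vsq (s, x))) has_real_derivative 2 * energy_rate (s, x)) (at s)"
      if "s \<in> I" for s x
      using DERIV_energy_density[OF that] .
    have "continuous_on \<Omega> (\<lambda>z. Wsq z / (1 - vsq z))"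
      by (intro continuous_intros continuous_on_\<Omega> smooth_on_quantities one_minus_vsq_nonzero)
    then show "(\<lambda>x. Wsq (s, x) / (1 - vsq (s, x))) integrable_on cbox 0 One" if "s \<in> I" for s
      by (intro integrable_continuous continuous_on_subset[OF continuous_on_space_slice[OF _ that]]) auto
    have "continuous_on (I \<times> cbox 0 One) (\<lambda>z. 2 * energy_rate z)"
      by (intro continuous_intros continuous_on_subset[OF continuous_on_energy_rate]) auto
    then show "continuous_on (I \<times> cbox 0 One) (\<lambda>(s, x). 2 * energy_rate (s, x))"
      by (simp add: case_prod_beta')
  qed (use t in auto)
  from DERIV_cmult[OF this, of "1/2"]
  have "((\<lambda>s. 1/2 * integral (cbox 0 One) (\<lambda>x. Wsq (s, x) / (1 - vsq (s, x)))) has_real_derivative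
      tint (\<lambda>x. energy_rate (t, x))) (at t)"
    by (simp add: tint_def)
  then show ?thesis
  proof (rule has_field_derivative_transform_within_open[where S=I])
    show "1/2 * integral (cbox 0 One) (\<lambda>x. Wsq (s, x) / (1 - vsq (s, x)))
        = 1/2 * tint (\<lambda>x. 1 / (1 - (norm (v s x))\<^sup>2) * (\<Sum>i\<in>UNIV. wv v s i x * wv v s i x))" if "s \<in> I" for s
      using that by (simp add: tint_def norm_v_sq wv_eq Wsq_def)
  qed (use t in auto)
qed

lemma one_minus_K_vsq_nonzero: "z \<in> \<Omega> \<Longrightarrow> 1 - K * vsq z \<noteq> 0"
  using one_minus_K_mult_ge[OF K_nonneg K_le] vsq_bounds[of z] by force

lemma velocity_dot_time_deriv:
  assumes t: "t \<in> I"
  shows "u (t, y) = - (\<alpha> * (1 - 3*K) / t) * g_coeff K (vsq (t, y))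
    + t powr (-\<alpha>) * (p_coeff K (vsq (t, y)) * vdL (t, y) - vw (t, y) + q_coeff K (vsq (t, y)) * divv (t, y))"
proof -
  define c \<tau> b k1 k2 where "c = \<alpha> * (1 - 3*K) / t" and "\<tau> = t powr (-\<alpha>)"
    and "b = beta K (vsq (t, y))" and "k1 = K / (1 + K)" and "k2 = (1 - K) / (1 + K)"
  have "dt (vel m) (t, y) = - c * vel m (t, y) - k1 * \<tau> * (1 - vsq (t, y)) * dx m Lfun (t, y)
      - \<tau> * (\<Sum>j\<in>UNIV. vel j (t, y) * dx j (vel m) (t, y)) + \<tau> * (1 - b) * vel m (t, y) * divv (t, y)
      + \<tau> * k2 * (1 - b) * vel m (t, y) * vdL (t, y) + c * b * vsq (t, y) * vel m (t, y)" for m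
    using velocity_eq[OF t, where x=y and i=m]
    by (simp add: dtd_v[OF t] pd_v[OF t] pd_L[OF t] norm_v_sq divv_def vdL_def c_def \<tau>_def b_def k1_def k2_def beta_def
        field_simps)
  note Vt = this
  show ?thesis
    unfolding u_def Vt c_def[symmetric] \<tau>_def[symmetric] g_coeff_def p_coeff_def q_coeff_def
      b_def[symmetric] k1_def[symmetric] k2_def[symmetric]
    unfolding vsq_def vw_def w_def vdL_def by (simp add: sum_3 algebra_simps)
qed

lemma has_derivative_slice:
  "smooth_on \<Omega> f \<Longrightarrow> t \<in> I \<Longrightarrow> ((\<lambda>y. f (t, y)) has_derivative (\<lambda>h. dir_deriv f (0, h) (t, y))) (at y)"
  by (rule has_derivative_space_slice[OF differentiable_at_\<Omega>]) auto

lemma pd_slice: "smooth_on \<Omega> f \<Longrightarrow> t \<in> I \<Longrightarrow> pd k (\<lambda>y. f (t, y)) y = dx k f (t, y)"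
  by (rule pd_space_slice[OF differentiable_at_\<Omega>]) auto

lemma dx_u:
  fixes y :: "real^3"
  assumes t: "t \<in> I"
  defines "z \<equiv> (t, y)"
  shows "dx k u z = - (\<alpha> * (1 - 3*K) / t) * (2 * w k z * g_coeff' K (vsq z))
    + t powr (-\<alpha>) * (2 * w k z * p_coeff' K (vsq z) * vdL z + p_coeff K (vsq z) * dx k vdL z - dx k vw z
      + 2 * w k z * q_coeff' K (vsq z) * divv z + q_coeff K (vsq z) * dx k divv z)"
proof -
  have zI: "(t, y') \<in> \<Omega>" for y' using t by simp
  define c \<tau> where "c = \<alpha> * (1 - 3*K) / t" and "\<tau> = t powr (-\<alpha>)"
  define D where "D f h = dir_deriv f (0, h) (t, y)" for f h
  have slice: "((\<lambda>y. f (t, y)) has_derivative D f) (at y)" if "smooth_on \<Omega> f" for f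
    unfolding D_def by (rule has_derivative_slice[OF that t])
  note slice = slice[OF smooth_on_quantities(1)] slice[OF smooth_on_quantities(5)]
    slice[OF smooth_on_quantities(6)] slice[OF smooth_on_quantities(7)]
  note nz = one_minus_K_vsq_nonzero[OF zI]
  note chain = DERIV_compose_FDERIV[OF g_coeff_deriv[OF nz] slice(1)]
    DERIV_compose_FDERIV[OF p_coeff_deriv[OF nz] slice(1)] DERIV_compose_FDERIV[OF q_coeff_deriv[OF nz] slice(1)]
  have "((\<lambda>y. - c * g_coeff K (vsq (t, y)) + \<tau> * (p_coeff K (vsq (t, y)) * vdL (t, y) - vw (t, y)
      + q_coeff K (vsq (t, y)) * divv (t, y))) has_derivative
      (\<lambda>h. - c * (D vsq h * g_coeff' K (vsq z)) + \<tau> * (D vsq h * p_coeff' K (vsq z) * vdL z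
        + p_coeff K (vsq z) * D vdL h - D vw h + D vsq h * q_coeff' K (vsq z) * divv z
        + q_coeff K (vsq z) * D divv h))) (at y)"
    unfolding z_def by (rule derivative_eq_intros chain slice refl | simp add: algebra_simps)+
  then have "pd k (\<lambda>y. u (t, y)) y = - c * (2 * w k z * g_coeff' K (vsq z)) + \<tau> * (2 * w k z * p_coeff' K (vsq z) * vdL z
        + p_coeff K (vsq z) * dx k vdL z - dx k vw z + 2 * w k z * q_coeff' K (vsq z) * divv z
        + q_coeff K (vsq z) * dx k divv z)"
    using dx_vsq[OF zI] by (simp add: velocity_dot_time_deriv[OF t] c_def \<tau>_def pd_eq D_def z_def
        flip: dx_def)
  then show ?thesis using pd_slice[OF smooth_on_quantities(4) t] by (simp add: c_def \<tau>_def z_def)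
qed

lemma sum_w_dx_vw:
  assumes "z \<in> \<Omega>"
  shows "(\<Sum>k\<in>UNIV. w k z * dx k vw z)
    = (\<Sum>k\<in>UNIV. \<Sum>j\<in>UNIV. w k z * dx k (vel j) z * w j z) + (\<Sum>j\<in>UNIV. vel j z * dx j Wsq z) / 2"
  by (simp add: dx_vw[OF assms] dx_Wsq[OF assms] sum_3 algebra_simps)

definition flux :: "3 \<Rightarrow> real \<times> (real^3) \<Rightarrow> real" where
  "flux j z = vel j z * Wsq z / (1 - vsq z)"

lemma periodic3_slice_vel: "t \<in> I \<Longrightarrow> periodic3 (\<lambda>y. vel m (t, y))"
  using periodic_v by (simp add: periodic3_def)

lemma periodic3_slice_dx_vel:
  assumes t: "t \<in> I" shows "periodic3 (\<lambda>y. dx i (vel m) (t, y))"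
proof -
  have eq: "pd i (\<lambda>y. vel m (t, y)) = (\<lambda>y. dx i (vel m) (t, y))"
    using pd_slice[OF smooth_on_vel t] by blast
  from periodic3_pd[OF periodic3_slice_vel[OF t], of i m] show ?thesis unfolding eq .
qed

lemma periodic3_slice_flux: "t \<in> I \<Longrightarrow> periodic3 (\<lambda>y. flux j (t, y))"
  using periodic3_slice_vel periodic3_slice_dx_vel
  by (simp add: periodic3_def flux_def Wsq_def w_def vsq_def)

lemma has_derivative_flux:
  assumes t: "t \<in> I"
  shows "((\<lambda>y. flux j (t, y)) has_derivative (\<lambda>h. (dir_deriv (vel j) (0, h) (t, y) * Wsq (t, y)
      + vel j (t, y) * dir_deriv Wsq (0, h) (t, y)) / (1 - vsq (t, y))
      + vel j (t, y) * Wsq (t, y) * dir_deriv vsq (0, h) (t, y) / (1 - vsq (t, y))\<^sup>2)) (at y)"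
proof -
  have z: "(t, y) \<in> \<Omega>" using t by simp
  note nz = one_minus_vsq_pos[OF z]
  show ?thesis unfolding flux_def
    by (rule derivative_eq_intros has_derivative_slice[OF _ t] smooth_on_vel smooth_on_quantities refl
        | use nz in \<open>simp add: field_simps power2_eq_square\<close>)+
qed

lemma pd_flux:
  fixes y :: "real^3"
  assumes t: "t \<in> I"
  defines "z \<equiv> (t, y)"
  shows "pd j (\<lambda>y. flux j (t, y)) y = dx j (vel j) z * Wsq z / (1 - vsq z) + vel j z * dx j Wsq z / (1 - vsq z)
    + 2 * vel j z * Wsq z * w j z / (1 - vsq z)\<^sup>2"
  using pd_eq[OF has_derivative_flux[OF t]] dx_vsq[of z j] t
  by (simp add: z_def add_divide_distrib flip: dx_def)

lemma continuous_on_slice: "smooth_on \<Omega> f \<Longrightarrow> t \<in> I \<Longrightarrow> continuous_on UNIV (\<lambda>y. f (t, y))"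
  by (rule continuous_on_space_slice[OF continuous_on_\<Omega>])

lemma tint_div_flux:
  assumes t: "t \<in> I"
  shows "tint (\<lambda>y. \<Sum>j\<in>UNIV. pd j (\<lambda>y. flux j (t, y)) y) = 0"
proof -
  note cs = continuous_on_slice[OF _ t]
  have nz: "\<forall>y\<in>UNIV. 1 - vsq (t, y) \<noteq> 0" "\<forall>y\<in>UNIV. (1 - vsq (t, y))\<^sup>2 \<noteq> 0"
    using one_minus_vsq_nonzero t by auto
  have "(pd j (\<lambda>y. flux j (t, y)) has_integral 0) (cbox 0 One)" for j
  proof -
    have cont: "continuous_on UNIV (pd j (\<lambda>y. flux j (t, y)))"
      unfolding pd_flux[OF t, abs_def]
      by (intro continuous_intros cs smooth_on_vel smooth_on_dx smooth_on_quantities nz)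
    have diff: "(\<lambda>y. flux j (t, y)) differentiable (at y)" for y
      using has_derivative_flux[OF t] unfolding differentiable_def by blast
    have "tint (pd j (\<lambda>y. flux j (t, y))) = 0"
      by (rule tint_pd_periodic3[OF periodic3_slice_flux[OF t] diff cont])
    then show ?thesis
      using integrable_integral[OF integrable_cube[OF cont]] by (simp add: tint_def)
  qed
  then show ?thesis
    using has_integral_sum[of UNIV "\<lambda>j. pd j (\<lambda>y. flux j (t, y))" "\<lambda>_. 0" "cbox 0 One"]
    by (simp add: tint_def integral_unique)
qed

definition Qform :: "real \<times> (real^3) \<Rightarrow> real" where
  "Qform z = (\<Sum>k\<in>UNIV. \<Sum>j\<in>UNIV. w k z * dx k (vel j) z * w j z)"

lemma sum_w_dx_u:
  fixes y :: "real^3"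
  assumes t: "t \<in> I"
  defines "z \<equiv> (t, y)" and "\<phi> \<equiv> vsq (t, y)" and "c \<equiv> \<alpha> * (1 - 3*K) / t" and "\<tau> \<equiv> t powr (-\<alpha>)"
  shows "(\<Sum>k\<in>UNIV. w k z * dx k u z) = - 2 * c * g_coeff' K \<phi> * Wsq z
    + \<tau> * (2 * p_coeff' K \<phi> * vdL z * Wsq z + p_coeff K \<phi> * (\<Sum>i\<in>UNIV. w i z * dx i vdL z)
      - (Qform z + (\<Sum>j\<in>UNIV. vel j z * dx j Wsq z) / 2)
      + 2 * q_coeff' K \<phi> * divv z * Wsq z + q_coeff K \<phi> * (\<Sum>i\<in>UNIV. w i z * dx i divv z))"
proof -
  have z: "z \<in> \<Omega>" using t by (simp add: z_def)
  have "(\<Sum>k\<in>UNIV. w k z * dx k u z) = - 2 * c * g_coeff' K \<phi> * Wsq z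
    + \<tau> * (2 * p_coeff' K \<phi> * vdL z * Wsq z + p_coeff K \<phi> * (\<Sum>i\<in>UNIV. w i z * dx i vdL z)
      - (\<Sum>k\<in>UNIV. w k z * dx k vw z)
      + 2 * q_coeff' K \<phi> * divv z * Wsq z + q_coeff K \<phi> * (\<Sum>i\<in>UNIV. w i z * dx i divv z))"
    unfolding dx_u[OF t, where y=y, folded z_def \<phi>_def c_def \<tau>_def] Wsq_def by (simp add: sum_3 algebra_simps)
  then show ?thesis by (simp add: sum_w_dx_vw[OF z] Qform_def)
qed

lemma sum_pd_flux:
  fixes y :: "real^3"
  assumes t: "t \<in> I"
  defines "z \<equiv> (t, y)"
  shows "(\<Sum>j\<in>UNIV. pd j (\<lambda>y. flux j (t, y)) y) = divv z * Wsq z / (1 - vsq z)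
    + (\<Sum>j\<in>UNIV. vel j z * dx j Wsq z) / (1 - vsq z) + 2 * vw z * Wsq z / (1 - vsq z)\<^sup>2"
  unfolding pd_flux[OF t, where y=y, folded z_def]
  by (simp add: divv_def vw_def sum.distrib sum_divide_distrib sum_distrib_left sum_distrib_right algebra_simps)

lemma pointwise_identity:
  fixes x :: "real^3"
  assumes t: "t \<in> I"
  defines "z \<equiv> (t, x)" and "c \<equiv> \<alpha> * (1 - 3*K) / t" and "\<tau> \<equiv> t powr (-\<alpha>)"
  shows "energy_rate z + c * (Wsq z / (1 - vsq z))
      + K / (1 + K) * \<tau> * ((\<Sum>i\<in>UNIV. w i z * dx i vdL z) * (1 - vsq z) / (1 - K * vsq z))
      - \<tau> * ((\<Sum>i\<in>UNIV. w i z / (1 - vsq z) * dx i divv z) * vsq z * (1 - (1 - K) / (1 - K * vsq z)))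
      + \<tau> / 2 * (\<Sum>j\<in>UNIV. pd j (\<lambda>y. flux j (t, y)) x)
    = remainder K (vsq z) c \<tau> (u z) (Wsq z) (vdL z) (vw z) (divv z) (Qform z)"
proof -
  have z: "z \<in> \<Omega>" using t by (simp add: z_def)
  have Y: "(\<Sum>i\<in>UNIV. w i z / (1 - vsq z) * dx i divv z) * vsq z * (1 - (1 - K) / (1 - K * vsq z))
      = (\<Sum>i\<in>UNIV. w i z * dx i divv z) / (1 - vsq z) * vsq z * (1 - beta K (vsq z))"
    by (simp add: beta_def sum_divide_distrib)
  show ?thesis
    unfolding energy_rate_def Y sum_pd_flux[OF t, where y=x, folded z_def] c_def \<tau>_def
    by (rule remainder_identity[OF one_minus_vsq_pos[OF z, THEN less_imp_neq, symmetric]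
          one_minus_K_vsq_nonzero[OF z] _ sum_w_dx_u[OF t, where y=x, folded z_def]])
       (use K_nonneg in simp)
qed

definition grad_v_sq :: "real \<times> (real^3) \<Rightarrow> real" where
  "grad_v_sq z = (\<Sum>i\<in>UNIV. \<Sum>m\<in>UNIV. (dx i (vel m) z)\<^sup>2)"

definition grad_L_sq :: "real \<times> (real^3) \<Rightarrow> real" where
  "grad_L_sq z = (\<Sum>n\<in>UNIV. (dx n Lfun z)\<^sup>2)"

lemma norm_v_le_v_Linf:
  assumes t: "t \<in> I" shows "norm (v t x) \<le> v_Linf v t"
proof -
  have "continuous_on UNIV (\<lambda>y. sqrt (vsq (t, y)))"
    by (intro continuous_intros continuous_on_slice[OF smooth_on_quantities(1) t])
  moreover have "norm (v t y) = sqrt (vsq (t, y))" for y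
    by (simp flip: norm_v_sq)
  ultimately have "continuous_on UNIV (\<lambda>y. norm (v t y))" by simp
  moreover have "periodic3 (\<lambda>y. norm (v t y))" using periodic_v[OF t] by (simp add: periodic3_def)
  ultimately show ?thesis unfolding v_Linf_def using periodic3_le_SUP[of "\<lambda>y. norm (v t y)"] by simp
qed

lemma sqrt_grad_v_sq_le_Dv_Linf:
  assumes t: "t \<in> I" shows "sqrt (grad_v_sq (t, x)) \<le> Dv_Linf v t"
proof -
  have "continuous_on UNIV (\<lambda>y. sqrt (grad_v_sq (t, y)))"
    unfolding grad_v_sq_def
    by (intro continuous_intros continuous_on_slice[OF _ t] smooth_on_dx smooth_on_vel)
  moreover have "periodic3 (\<lambda>y. sqrt (grad_v_sq (t, y)))"
    using periodic3_slice_dx_vel[OF t] by (simp add: periodic3_def grad_v_sq_def)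
  moreover have "Dv_Linf v t = (SUP y. sqrt (grad_v_sq (t, y)))"
    by (simp add: Dv_Linf_def grad_v_sq_def pd_v[OF t])
  ultimately show ?thesis using periodic3_le_SUP[of "\<lambda>y. sqrt (grad_v_sq (t, y))"] by simp
qed

lemma remainder_pointwise_bound:
  fixes x :: "real^3"
  assumes t: "t \<in> I"
  defines "z \<equiv> (t, x)" and "c \<equiv> \<alpha> * (1 - 3*K) / t" and "\<tau> \<equiv> t powr (-\<alpha>)"
    and "V \<equiv> v_Linf v t" and "E \<equiv> Dv_Linf v t"
  shows "\<bar>remainder K (vsq z) c \<tau> (u z) (Wsq z) (vdL z) (vw z) (divv z) (Qform z)\<bar>
    \<le> 30 * (c + \<tau>) * (V\<^sup>2 * grad_v_sq z + V\<^sup>2 * E * grad_v_sq z + V^3 * E * (grad_L_sq z + grad_v_sq z))"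
proof -
  define r sa sl where "r = norm (v t x)" and "sa = sqrt (grad_v_sq z)" and "sl = sqrt (grad_L_sq z)"
  have a0: "0 \<le> grad_v_sq z" and l0: "0 \<le> grad_L_sq z"
    by (simp_all add: grad_v_sq_def grad_L_sq_def sum_nonneg)
  have r: "0 \<le> r" "r \<le> 1/10" "vsq z = r\<^sup>2" "r \<le> V"
    using small_v[OF t] norm_v_le_v_Linf[OF t] by (simp_all add: r_def z_def V_def norm_v_sq less_imp_le)
  have sa: "0 \<le> sa" "sa\<^sup>2 = grad_v_sq z" "sa \<le> E" and sl: "0 \<le> sl" "sl\<^sup>2 = grad_L_sq z"
    using a0 l0 sqrt_grad_v_sq_le_Dv_Linf[OF t] by (simp_all add: sa_def sl_def E_def z_def)
  have t0: "0 < t" using t t0_nonneg by simp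
  have c: "0 \<le> c" using alpha_pos K_le t0 by (simp add: c_def)
  have len_v: "sqrt (\<Sum>m\<in>UNIV. (vel m z)\<^sup>2) = r"
    using r(1,3) by (simp add: vsq_def power2_eq_square)
  have W0: "0 \<le> Wsq z" by (simp add: Wsq_def sum_nonneg)
  have W: "Wsq z \<le> r\<^sup>2 * grad_v_sq z"
    using sum_square_matrix_vector_le[of "\<lambda>m. vel m z" "\<lambda>i m. dx i (vel m) z"] r(3)
    by (simp add: Wsq_def w_def grad_v_sq_def vsq_def power2_eq_square)
  have X: "Wsq z \<le> V\<^sup>2 * grad_v_sq z"
    using W mult_right_mono[OF power_mono[OF r(4) r(1)] a0, of 2] by linarith
  have Y: "sa * Wsq z \<le> V\<^sup>2 * E * grad_v_sq z"
    using mult_mono[OF sa(3) X _ W0] sa by (simp add: mult_ac)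
  have Z: "r * sl * Wsq z \<le> V^3 * E * (grad_L_sq z + grad_v_sq z)"
  proof -
    have "r * sl * Wsq z \<le> r * sl * (r\<^sup>2 * (sa * sa))"
      using W r(1) sl(1) sa(2) by (intro mult_left_mono) (auto simp: power2_eq_square)
    also have "\<dots> = r^3 * (sl * sa) * sa" by (simp add: power2_eq_square power3_eq_cube)
    also have "\<dots> \<le> V^3 * (grad_L_sq z + grad_v_sq z) * E"
    proof (intro mult_mono power_mono)
      have "2 * (sl * sa) \<le> sl\<^sup>2 + sa\<^sup>2" using sum_squares_bound[of sl sa] by simp
      then show "sl * sa \<le> grad_L_sq z + grad_v_sq z"
        using sl sa mult_nonneg_nonneg[OF sl(1) sa(1)] by linarith
    qed (use r sa sl a0 l0 in auto)
    finally show ?thesis by (simp add: mult_ac)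
  qed
  have P: "\<bar>vdL z\<bar> \<le> r * sl"
    using abs_sum_mult_le[of "\<lambda>n. vel n z" "\<lambda>n. dx n Lfun z" UNIV] len_v
    by (simp add: vdL_def sl_def grad_L_sq_def)
  have S: "\<bar>vw z\<bar> \<le> r\<^sup>2 * sa"
  proof -
    have "\<bar>vw z\<bar> \<le> r * sqrt (Wsq z)"
      using abs_sum_mult_le[of "\<lambda>j. vel j z" "\<lambda>j. w j z" UNIV] len_v
      by (simp add: vw_def Wsq_def power2_eq_square)
    also have "\<dots> \<le> r * sqrt (r\<^sup>2 * grad_v_sq z)"
      using W r(1) by (intro mult_left_mono real_sqrt_le_mono) auto
    finally show ?thesis using r(1) by (simp add: real_sqrt_mult sa_def power2_eq_square)
  qed
  have Dv: "\<bar>divv z\<bar> \<le> 2 * sa"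
  proof -
    have "sqrt (real CARD(3)) \<le> 2" using real_sqrt_le_mono[of 3 "2\<^sup>2"] by simp
    from mult_right_mono[OF this sa(1)] show ?thesis
      using abs_trace_le[of "\<lambda>i m. dx i (vel m) z"] by (simp add: divv_def sa_def grad_v_sq_def)
  qed
  have Q: "\<bar>Qform z\<bar> \<le> Wsq z * sa"
    using abs_quadratic_form_le[of "\<lambda>k. w k z" "\<lambda>k j. dx k (vel j) z"]
    by (simp add: Qform_def Wsq_def sa_def grad_v_sq_def power2_eq_square)
  show ?thesis
    by (rule remainder_bound[OF K_nonneg K_le r(1,2,3) c _ sa(1) W0 X Y Z P S Dv Q])
       (simp_all add: \<tau>_def velocity_dot_time_deriv[OF t] z_def c_def)
qed

lemma tint_grad_v_sq: "t \<in> I \<Longrightarrow> tint (\<lambda>x. grad_v_sq (t, x)) = (Dv_L2 v t)\<^sup>2"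
proof -
  assume t: "t \<in> I"
  have "0 \<le> tint (\<lambda>x. grad_v_sq (t, x))"
    unfolding tint_def grad_v_sq_def
    by (intro integral_nonneg integrable_cube continuous_intros continuous_on_slice[OF _ t]
        smooth_on_dx smooth_on_vel) (simp add: sum_nonneg)
  then show ?thesis by (simp add: Dv_L2_def grad_v_sq_def pd_v[OF t])
qed

lemma tint_grad_L_sq: "t \<in> I \<Longrightarrow> tint (\<lambda>x. grad_L_sq (t, x)) = (DL_L2 L t)\<^sup>2"
proof -
  assume t: "t \<in> I"
  have "0 \<le> tint (\<lambda>x. grad_L_sq (t, x))"
    unfolding tint_def grad_L_sq_def
    by (intro integral_nonneg integrable_cube continuous_intros continuous_on_slice[OF _ t]
        smooth_on_dx smooth_on_Lfun) (simp add: sum_nonneg)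
  then show ?thesis by (simp add: DL_L2_def grad_L_sq_def pd_L[OF t])
qed

lemma rate_coefficients_le:
  assumes t: "t \<in> I"
  shows "\<alpha> * (1 - 3*K) / t + t powr (-\<alpha>) \<le> (\<alpha> + 1) * (1 + t powr (1 - \<alpha>)) / t"
proof -
  have t0: "0 < t" using t t0_nonneg by simp
  have "\<alpha> * (1 - 3*K) \<le> \<alpha>" using alpha_pos K_nonneg by (intro mult_left_le) auto
  then have c: "\<alpha> * (1 - 3*K) / t \<le> (\<alpha> + 1) / t" using t0 by (simp add: divide_right_mono)
  have "t powr (-\<alpha>) = 1 * t powr (1 - \<alpha>) / t" using t0 by (simp add: powr_diff powr_minus divide_inverse)
  also have "\<dots> \<le> (\<alpha> + 1) * t powr (1 - \<alpha>) / t"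
    using alpha_pos t0 by (intro divide_right_mono mult_right_mono) auto
  finally have "\<alpha> * (1 - 3*K) / t + t powr (-\<alpha>) \<le> (\<alpha> + 1) / t + (\<alpha> + 1) * t powr (1 - \<alpha>) / t"
    using c by linarith
  then show ?thesis by (simp add: add_divide_distrib distrib_left)
qed

end


context euler_solution
begin

lemma energy_estimate:
  assumes t: "t \<in> I"
  shows "\<exists>D. ((\<lambda>s. 1/2 * tint (\<lambda>x. 1 / (1 - (norm (v s x))\<^sup>2) * (\<Sum>i\<in>UNIV. wv v s i x * wv v s i x)))
           has_real_derivative D) (at t)
        \<and> \<bar>D - ( - (\<alpha> * (1 - 3*K) / t)
                   * tint (\<lambda>x. (\<Sum>i\<in>UNIV. wv v t i x * wv v t i x) / (1 - (norm (v t x))\<^sup>2))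
                 - K / (1 + K) * t powr (-\<alpha>)
                   * tint (\<lambda>x. (\<Sum>i\<in>UNIV. wv v t i x
                        * pd i (\<lambda>y. \<Sum>n\<in>UNIV. v t y $ n * pd n (L t) y) x)
                        * (1 - (norm (v t x))\<^sup>2) / (1 - K * (norm (v t x))\<^sup>2))
                 + t powr (-\<alpha>)
                   * tint (\<lambda>x. (\<Sum>i\<in>UNIV. wv v t i x / (1 - (norm (v t x))\<^sup>2)
                        * pd i (\<lambda>y. \<Sum>j\<in>UNIV. pd j (\<lambda>z. v t z $ j) y) x)
                        * (norm (v t x))\<^sup>2 * (1 - (1 - K) / (1 - K * (norm (v t x))\<^sup>2))))\<bar>
          \<le> 30 * (\<alpha> + 1) * (1 + t powr (1 - \<alpha>)) / t
              * ((Dv_L2 v t)\<^sup>2 * (v_Linf v t)\<^sup>2 + (Dv_L2 v t)\<^sup>2 * (v_Linf v t)\<^sup>2 * Dv_Linf v t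
                 + (Dv_L2 v t)\<^sup>2 * (v_Linf v t)^3 * Dv_Linf v t + (DL_L2 L t)\<^sup>2 * (v_Linf v t)^3 * Dv_Linf v t)"
proof -
  define c \<tau> V E where "c = \<alpha> * (1 - 3*K) / t" and "\<tau> = t powr (-\<alpha>)"
    and "V = v_Linf v t" and "E = Dv_Linf v t"
  define m1 m2 m3 where "m1 x = Wsq (t, x) / (1 - vsq (t, x))"
    and "m2 x = (\<Sum>i\<in>UNIV. w i (t, x) * dx i vdL (t, x)) * (1 - vsq (t, x)) / (1 - K * vsq (t, x))"
    and "m3 x = (\<Sum>i\<in>UNIV. w i (t, x) / (1 - vsq (t, x)) * dx i divv (t, x)) * vsq (t, x)
      * (1 - (1 - K) / (1 - K * vsq (t, x)))" for x
  define R where "R x = remainder K (vsq (t, x)) c \<tau> (u (t, x)) (Wsq (t, x)) (vdL (t, x)) (vw (t, x))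
      (divv (t, x)) (Qform (t, x))" for x
  define B where "B x = 30 * (c + \<tau>) * (V\<^sup>2 * grad_v_sq (t, x) + V\<^sup>2 * E * grad_v_sq (t, x)
      + V^3 * E * (grad_L_sq (t, x) + grad_v_sq (t, x)))" for x
  have T1: "tint (\<lambda>x. (\<Sum>i\<in>UNIV. wv v t i x * wv v t i x) / (1 - (norm (v t x))\<^sup>2)) = tint m1"
    by (simp add: m1_def[abs_def] wv_eq[OF t] norm_v_sq Wsq_def)
  have "(\<lambda>y. \<Sum>n\<in>UNIV. v t y $ n * pd n (L t) y) = (\<lambda>y. vdL (t, y))"
    by (simp add: vdL_def pd_L[OF t])
  then have pd_vdL: "pd i (\<lambda>y. \<Sum>n\<in>UNIV. v t y $ n * pd n (L t) y) x = dx i vdL (t, x)" for i x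
    by (simp add: pd_slice[OF smooth_on_quantities(5) t])
  have "(\<lambda>y. \<Sum>j\<in>UNIV. pd j (\<lambda>z. v t z $ j) y) = (\<lambda>y. divv (t, y))"
    by (simp add: divv_def pd_v[OF t])
  then have pd_divv: "pd i (\<lambda>y. \<Sum>j\<in>UNIV. pd j (\<lambda>z. v t z $ j) y) x = dx i divv (t, x)" for i x
    by (simp add: pd_slice[OF smooth_on_quantities(6) t])
  have T2: "tint (\<lambda>x. (\<Sum>i\<in>UNIV. wv v t i x * pd i (\<lambda>y. \<Sum>n\<in>UNIV. v t y $ n * pd n (L t) y) x)
      * (1 - (norm (v t x))\<^sup>2) / (1 - K * (norm (v t x))\<^sup>2)) = tint m2"
    by (simp add: m2_def[abs_def] wv_eq[OF t] norm_v_sq pd_vdL)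
  have T3: "tint (\<lambda>x. (\<Sum>i\<in>UNIV. wv v t i x / (1 - (norm (v t x))\<^sup>2)
      * pd i (\<lambda>y. \<Sum>j\<in>UNIV. pd j (\<lambda>z. v t z $ j) y) x)
      * (norm (v t x))\<^sup>2 * (1 - (1 - K) / (1 - K * (norm (v t x))\<^sup>2))) = tint m3"
    by (simp add: m3_def[abs_def] wv_eq[OF t] norm_v_sq pd_divv)
  note cs = continuous_on_slice[OF _ t]
  have nz: "\<forall>x\<in>UNIV. 1 - vsq (t, x) \<noteq> 0" "\<forall>x\<in>UNIV. 1 - K * vsq (t, x) \<noteq> 0"
    using one_minus_vsq_nonzero one_minus_K_vsq_nonzero t by auto
  have hasI: "(f has_integral tint f) (cbox 0 One)" if "continuous_on UNIV f" for f
    unfolding tint_def by (rule integrable_integral[OF integrable_cube[OF that]])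
  have ce: "continuous_on UNIV (\<lambda>x. energy_rate (t, x))"
    by (rule continuous_on_space_slice[OF continuous_on_energy_rate t])
  have cm: "continuous_on UNIV m1" "continuous_on UNIV m2" "continuous_on UNIV m3"
    unfolding m1_def[abs_def] m2_def[abs_def] m3_def[abs_def]
    by (intro continuous_intros cs smooth_on_quantities smooth_on_dx nz)+
  have cdiv: "continuous_on UNIV (\<lambda>x. \<Sum>j\<in>UNIV. pd j (\<lambda>y. flux j (t, y)) x)"
    unfolding sum_pd_flux[OF t]
    by (intro continuous_intros cs smooth_on_quantities smooth_on_dx smooth_on_vel) (use nz in auto)
  have RI: "(R has_integral tint (\<lambda>x. energy_rate (t, x)) + c * tint m1 + K / (1 + K) * \<tau> * tint m2
      - \<tau> * tint m3 + \<tau> / 2 * 0) (cbox 0 One)"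
  proof -
    have Req: "R = (\<lambda>x. energy_rate (t, x) + c * m1 x + K / (1 + K) * \<tau> * m2 x - \<tau> * m3 x
        + \<tau> / 2 * (\<Sum>j\<in>UNIV. pd j (\<lambda>y. flux j (t, y)) x))"
      unfolding R_def m1_def m2_def m3_def c_def \<tau>_def by (intro ext pointwise_identity[OF t, symmetric])
    have div0: "((\<lambda>x. \<Sum>j\<in>UNIV. pd j (\<lambda>y. flux j (t, y)) x) has_integral 0) (cbox 0 One)"
      using hasI[OF cdiv] tint_div_flux[OF t] by simp
    show ?thesis
      unfolding Req by (intro has_integral_add has_integral_diff has_integral_mult_right hasI ce cm div0)
  qed
  then have DR: "tint (\<lambda>x. energy_rate (t, x)) - (- c * tint m1 - K / (1 + K) * \<tau> * tint m2 + \<tau> * tint m3)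
      = integral (cbox 0 One) R"
    by (simp add: integral_unique)
  have ca: "continuous_on UNIV (\<lambda>x. grad_v_sq (t, x))" and cl: "continuous_on UNIV (\<lambda>x. grad_L_sq (t, x))"
    unfolding grad_v_sq_def grad_L_sq_def
    by (intro continuous_intros cs smooth_on_dx smooth_on_vel smooth_on_Lfun)+
  have B_int: "(B has_integral 30 * (c + \<tau>) * (V\<^sup>2 * (Dv_L2 v t)\<^sup>2 + V\<^sup>2 * E * (Dv_L2 v t)\<^sup>2
      + V^3 * E * ((DL_L2 L t)\<^sup>2 + (Dv_L2 v t)\<^sup>2))) (cbox 0 One)"
    unfolding B_def tint_grad_v_sq[OF t, symmetric] tint_grad_L_sq[OF t, symmetric]
    by (intro has_integral_add has_integral_mult_right hasI ca cl)
  have "norm (R x) \<le> B x" for x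
    unfolding R_def B_def c_def \<tau>_def V_def E_def real_norm_def by (rule remainder_pointwise_bound[OF t])
  with RI B_int have "\<bar>integral (cbox 0 One) R\<bar> \<le> integral (cbox 0 One) B"
    using integral_norm_bound_integral[of R "cbox 0 One" B] by auto
  also have "\<dots> \<le> 30 * (\<alpha> + 1) * (1 + t powr (1 - \<alpha>)) / t * ((Dv_L2 v t)\<^sup>2 * V\<^sup>2
      + (Dv_L2 v t)\<^sup>2 * V\<^sup>2 * E + (Dv_L2 v t)\<^sup>2 * V^3 * E + (DL_L2 L t)\<^sup>2 * V^3 * E)"
  proof -
    have a0: "0 \<le> grad_v_sq (t, 0)" by (simp add: grad_v_sq_def sum_nonneg)
    have E0: "0 \<le> E"
      using sqrt_grad_v_sq_le_Dv_Linf[OF t, of 0] real_sqrt_ge_zero[OF a0] unfolding E_def by linarith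
    have V0: "0 \<le> V"
      using norm_v_le_v_Linf[OF t, of 0] norm_ge_zero[of "v t 0"] unfolding V_def by linarith
    define P where "P = (Dv_L2 v t)\<^sup>2 * V\<^sup>2 + (Dv_L2 v t)\<^sup>2 * V\<^sup>2 * E + (Dv_L2 v t)\<^sup>2 * V^3 * E
        + (DL_L2 L t)\<^sup>2 * V^3 * E"
    have "0 \<le> P" using E0 V0 by (simp add: P_def)
    from mult_right_mono[OF rate_coefficients_le[OF t, folded c_def \<tau>_def] this]
    have "30 * ((c + \<tau>) * P) \<le> 30 * ((\<alpha> + 1) * (1 + t powr (1 - \<alpha>)) / t * P)" by simp
    moreover have "integral (cbox 0 One) B = 30 * ((c + \<tau>) * P)"
      using integral_unique[OF B_int] by (simp add: P_def algebra_simps)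
    moreover have "30 * ((\<alpha> + 1) * (1 + t powr (1 - \<alpha>)) / t * P)
        = 30 * (\<alpha> + 1) * (1 + t powr (1 - \<alpha>)) / t * P" by simp
    ultimately show ?thesis unfolding P_def[symmetric] by linarith
  qed
  finally have "\<bar>tint (\<lambda>x. energy_rate (t, x)) - (- c * tint m1 - K / (1 + K) * \<tau> * tint m2 + \<tau> * tint m3)\<bar>
      \<le> 30 * (\<alpha> + 1) * (1 + t powr (1 - \<alpha>)) / t * ((Dv_L2 v t)\<^sup>2 * V\<^sup>2
      + (Dv_L2 v t)\<^sup>2 * V\<^sup>2 * E + (Dv_L2 v t)\<^sup>2 * V^3 * E + (DL_L2 L t)\<^sup>2 * V^3 * E)"
    unfolding DR .
  with energy_has_derivative[OF t] show ?thesis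
    unfolding T1 T2 T3 c_def \<tau>_def V_def E_def by blast
qed

end

definition poly_coeffs :: "nat \<times> nat \<times> nat \<times> nat \<Rightarrow> real" where
  "poly_coeffs m = (if m \<in> {(0,2,2,0), (0,2,2,1), (0,2,3,1), (2,0,3,1)} then 1 else 0)"

lemma poly_coeffs_support: "{m. poly_coeffs m \<noteq> 0} = {(0,2,2,0), (0,2,2,1), (0,2,3,1), (2,0,3,1)}"
  by (auto simp: poly_coeffs_def)

lemma lowdeg3_poly_coeffs: "lowdeg3 poly_coeffs"
  unfolding lowdeg3_def poly_coeffs_support by (auto simp: poly_coeffs_def)

lemma poly4_poly_coeffs:
  "poly4 poly_coeffs a b d e = b\<^sup>2 * d\<^sup>2 + b\<^sup>2 * d\<^sup>2 * e + b\<^sup>2 * d^3 * e + a\<^sup>2 * d^3 * e"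
  unfolding poly4_def poly_coeffs_support by (simp add: poly_coeffs_def)

theorem lemma4p7:
  fixes \<alpha> K :: real
  assumes "\<alpha> > 0" and "0 \<le> K" and "K \<le> 1/3"
  shows "\<exists>C c. lowdeg3 c \<and>
   (\<forall>(t0::real) t1 (v :: real \<Rightarrow> real^3 \<Rightarrow> real^3) (L :: real \<Rightarrow> real^3 \<Rightarrow> real).
     1 \<le> t0 \<and> t0 < t1
     \<and> (\<forall>i. smooth_on ({t0<..<t1} \<times> UNIV) (\<lambda>(t,x). v t x $ i))
     \<and> smooth_on ({t0<..<t1} \<times> UNIV) (\<lambda>(t,x). L t x)
     \<and> (\<forall>t\<in>{t0<..<t1}. periodic3 (v t) \<and> periodic3 (L t))
     \<and> (\<forall>t\<in>{t0<..<t1}. \<forall>x. norm (v t x) < 1/10)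
     \<and> (\<forall>t\<in>{t0<..<t1}. \<forall>x. \<forall>i.
          dtd (\<lambda>s y. v s y $ i) t x =
            - (\<alpha> * (1 - 3*K) / t) * v t x $ i
            - K / (1 + K) * t powr (-\<alpha>) * (1 - (norm (v t x))\<^sup>2) * pd i (L t) x
            - t powr (-\<alpha>) * (\<Sum>j\<in>UNIV. v t x $ j * pd j (\<lambda>y. v t y $ i) x)
            + t powr (-\<alpha>) * (1 - (1 - K) / (1 - K * (norm (v t x))\<^sup>2)) * v t x $ i
                * (\<Sum>j\<in>UNIV. pd j (\<lambda>y. v t y $ j) x)
            + t powr (-\<alpha>) * (1 - K) / (1 + K) * (1 - (1 - K) / (1 - K * (norm (v t x))\<^sup>2))
                * v t x $ i * (\<Sum>j\<in>UNIV. v t x $ j * pd j (L t) x)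
            + \<alpha> * (1 - 3*K) / t * (1 - K) / (1 - K * (norm (v t x))\<^sup>2)
                * (norm (v t x))\<^sup>2 * v t x $ i)
     \<and> (\<forall>t\<in>{t0<..<t1}. \<forall>x.
          dtd L t x =
            - (t powr (-\<alpha>) * (1 + K) / (1 - K * (norm (v t x))\<^sup>2) * (\<Sum>j\<in>UNIV. pd j (\<lambda>y. v t y $ j) x))
            - t powr (-\<alpha>) * (1 - K) / (1 - K * (norm (v t x))\<^sup>2) * (\<Sum>j\<in>UNIV. v t x $ j * pd j (L t) x)
            + \<alpha> * (1 + K) / t * (1 - 3*K) / (1 - K * (norm (v t x))\<^sup>2) * (norm (v t x))\<^sup>2)
     \<longrightarrow>
     (\<forall>t\<in>{t0<..<t1}. \<exists>D.
        ((\<lambda>s. 1/2 * tint (\<lambda>x. 1 / (1 - (norm (v s x))\<^sup>2) * (\<Sum>i\<in>UNIV. wv v s i x * wv v s i x)))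
           has_real_derivative D) (at t)
        \<and> \<bar>D - ( - (\<alpha> * (1 - 3*K) / t)
                   * tint (\<lambda>x. (\<Sum>i\<in>UNIV. wv v t i x * wv v t i x) / (1 - (norm (v t x))\<^sup>2))
                 - K / (1 + K) * t powr (-\<alpha>)
                   * tint (\<lambda>x. (\<Sum>i\<in>UNIV. wv v t i x
                        * pd i (\<lambda>y. \<Sum>n\<in>UNIV. v t y $ n * pd n (L t) y) x)
                        * (1 - (norm (v t x))\<^sup>2) / (1 - K * (norm (v t x))\<^sup>2))
                 + t powr (-\<alpha>)
                   * tint (\<lambda>x. (\<Sum>i\<in>UNIV. wv v t i x / (1 - (norm (v t x))\<^sup>2)
                        * pd i (\<lambda>y. \<Sum>j\<in>UNIV. pd j (\<lambda>z. v t z $ j) y) x)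
                        * (norm (v t x))\<^sup>2 * (1 - (1 - K) / (1 - K * (norm (v t x))\<^sup>2))))\<bar>
          \<le> C * (1 + t powr (1 - \<alpha>)) / t
              * poly4 c (DL_L2 L t) (Dv_L2 v t) (v_Linf v t) (Dv_Linf v t)))"
    apply (rule exI[of _ "30 * (\<alpha> + 1)"], rule exI[of _ poly_coeffs])
  apply (intro conjI lowdeg3_poly_coeffs allI impI ballI)
  subgoal premises H for t0 t1 v L t
  proof -
    interpret euler_solution \<alpha> K t0 t1 v L
      unfolding euler_solution_def using assms H(1) by auto
    show ?thesis using energy_estimate[OF H(2)] by (simp add: poly4_poly_coeffs)
  qed
  done

end
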